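(* Let $\beta\in C^1([0,1]^2)$ be strictly positive, let $d\in C^1(0,1)$ with $0<d_0\le d$ and $\|d\|_{C^1}\le d_1$, let $\varrho\in C^1(0,1)$ with $\varrho\ge 0$, $\|\varrho\|_{C^1}\le r$ and $\varrho\not\equiv 0$, and let $\gamma\equiv 1$. Then for every $S_*>0$ there exists a strictly positive function $v_*\in W^{2,1}(0,1)$ with $v_*'(0)=v_*'(1)=0$ such that $(v_*,S_* )$ is a steady state of the model, i.e. \begin{align*} 0&=(d v_*')'-\varrho v_*+S_*\int_0^1\beta(\cdot,y)v_*(y)^{2}\,\mathrm{d} y,\\ 0&=\int_0^1\varrho(x)v_*(x)\,\mathrm{d} x-S_*\int_0^1\int_0^1\beta(x,y)v_*(y)^{2}\,\mathrm{d} y\,\mathrm{d} x. \end{align*}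
   Context: This concerns steady states of the model $v_t-(d v_x)_x=-\varrho v+S\int_0^1\beta(x,y)v(y,t)^{1+\gamma(y)}\mathrm{d} y$, $S'=\int_0^1\varrho v\,\mathrm{d} x-S\int_0^1\int_0^1\beta(x,y)v(y,t)^{1+\gamma(y)}\mathrm{d} y\,\mathrm{d} x$, with Neumann boundary conditions $v_x(0,t)=v_x(1,t)=0$, in the case $\gamma\equiv1$. *)

theory Defs
  imports "HOL-Analysis.Analysis"
begin

definition unit_square :: "(real \<times> real) set" where
  "unit_square = {0..1} \<times> {0..1}"

text \<open>beta in C^1([0,1]^2): differentiable (one-sided at the boundary) on the closed
  square, with a Frechet derivative that depends continuously on the point.\<close>
definition C1_on_square :: "(real \<Rightarrow> real \<Rightarrow> real) \<Rightarrow> bool" where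
  "C1_on_square \<beta> \<longleftrightarrow>
     (\<exists>D :: real \<times> real \<Rightarrow> ((real \<times> real) \<Rightarrow>\<^sub>L real).
        (\<forall>z\<in>unit_square. ((\<lambda>(x,y). \<beta> x y) has_derivative blinfun_apply (D z)) (at z within unit_square))
        \<and> continuous_on unit_square D)"

text \<open>f in C^1(0,1) with norm sup|f| + sup|f'| bounded by M (sup over the open interval).\<close>
definition C1_open_bounded :: "(real \<Rightarrow> real) \<Rightarrow> real \<Rightarrow> bool" where
  "C1_open_bounded f M \<longleftrightarrow>
     (\<exists>f'. (\<forall>x\<in>{0<..<1}. (f has_real_derivative f' x) (at x))
        \<and> continuous_on {0<..<1} f'
        \<and> (\<forall>x\<in>{0<..<1}. \<forall>y\<in>{0<..<1}. \<bar>f x\<bar> + \<bar>f' y\<bar> \<le> M))"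

end

theory Submission
  imports Defs "HOL-Complex_Analysis.Great_Picard"
begin

text \<open>For a density \<open>w\<close> (the normalised positive part of \<open>v\<close>) the source
  \<open>\<rho> w - \<sigma>(w) \<integral>\<beta>(\<cdot>,y) w(y)\<^sup>2 dy\<close> with \<open>\<sigma>(w) = \<integral>\<rho> w / \<integral>\<integral>\<beta> w\<^sup>2\<close> has mean zero, so the
  Neumann problem \<open>(d v')' = source\<close> is solvable, uniquely once \<open>\<integral>v = 1\<close> is imposed. The solution map
  \<open>\<Phi>\<close> sends a bounded set of continuous functions of unit mass to equi-Lipschitz ones and is Lipschitz
  in the sup norm, so a Schauder-type argument gives a fixed point \<open>u\<close>: Kuhn's lemma yields
  approximate fixed points among interpolated grid functions, and Arzela-Ascoli extracts a limit.
  By the minimum principle for \<open>(d u')' = source\<close>, \<open>u\<close> is positive: at a minimum with \<open>u \<le> 0\<close> the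
  source would be \<open>-\<sigma>(w) \<integral>\<beta> w\<^sup>2 < 0\<close>. Hence \<open>w = u\<close>, and \<open>u\<close> is a steady state with
  \<open>S = \<sigma>(u) > 0\<close>. Since \<open>(v, \<sigma>) \<mapsto> (\<kappa> v, \<sigma> / \<kappa>)\<close> preserves steady states, every \<open>S > 0\<close> is
  reached. The coefficients, given on \<open>(0,1)\<close> with bounded derivatives, are first extended
  continuously to \<open>[0,1]\<close>.\<close>

section \<open>Approximate fixed points on the cube\<close>

definition in_unit_cube :: "nat \<Rightarrow> (nat \<Rightarrow> real) \<Rightarrow> bool" where
  "in_unit_cube n y \<longleftrightarrow> (\<forall>j<n. 0 \<le> y j \<and> y j \<le> 1)"

definition grid_point :: "nat \<Rightarrow> (nat \<Rightarrow> nat) \<Rightarrow> nat \<Rightarrow> real" where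
  "grid_point p x j = real (x j) / real p"

definition in_cell :: "nat \<Rightarrow> (nat \<Rightarrow> nat) \<Rightarrow> (nat \<Rightarrow> nat) \<Rightarrow> bool" where
  "in_cell n q x \<longleftrightarrow> (\<forall>j<n. q j \<le> x j \<and> x j \<le> q j + 1)"

text \<open>Sperner labelling for Kuhn's lemma: label 0 where \<open>G\<close> does not decrease the \<open>i\<close>-th
  coordinate, forced to 0 on the face \<open>x i = 0\<close> and to 1 on the face \<open>x i = p\<close>.\<close>
definition kuhn_label :: "((nat \<Rightarrow> real) \<Rightarrow> nat \<Rightarrow> real) \<Rightarrow> nat \<Rightarrow> (nat \<Rightarrow> nat) \<Rightarrow> nat \<Rightarrow> nat" where
  "kuhn_label G p x i =
     (if x i = 0 then 0 else if x i = p then 1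
      else if grid_point p x i \<le> G (grid_point p x) i then 0 else 1)"

lemma grid_point_in_unit_cube: "0 < p \<Longrightarrow> \<forall>j<n. x j \<le> p \<Longrightarrow> in_unit_cube n (grid_point p x)"
  by (auto simp: in_unit_cube_def grid_point_def divide_le_eq_1)

lemma kuhn_label_eq_0:
  "kuhn_label G p x i = 0 \<Longrightarrow> 0 \<le> G (grid_point p x) i \<Longrightarrow> grid_point p x i \<le> G (grid_point p x) i"
  by (auto simp: kuhn_label_def grid_point_def split: if_splits)

lemma kuhn_label_neq_0:
  "kuhn_label G p x i \<noteq> 0 \<Longrightarrow> G (grid_point p x) i \<le> 1 \<Longrightarrow> 0 < p
    \<Longrightarrow> G (grid_point p x) i \<le> grid_point p x i"
  by (auto simp: kuhn_label_def grid_point_def split: if_splits)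

lemma in_cell_le: "in_cell n q x \<Longrightarrow> \<forall>j<n. q j < p \<Longrightarrow> \<forall>j<n. x j \<le> p"
  by (auto simp: in_cell_def Suc_le_eq intro: le_trans)

lemma grid_point_in_cell:
  assumes "in_cell n q x" "j < n" "0 < p"
  shows "grid_point p q j \<le> grid_point p x j" "grid_point p x j \<le> grid_point p q j + 1 / real p"
proof -
  have "real (q j) \<le> real (x j)" "real (x j) \<le> real (q j) + 1" using assms by (auto simp: in_cell_def)
  then show "grid_point p q j \<le> grid_point p x j" "grid_point p x j \<le> grid_point p q j + 1 / real p"
    using assms(3) by (auto simp: grid_point_def divide_right_mono add_divide_distrib[symmetric])
qed

lemma kuhn_cell:
  fixes G :: "(nat \<Rightarrow> real) \<Rightarrow> nat \<Rightarrow> real"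
  assumes p: "0 < p"
    and range: "\<And>y i. in_unit_cube n y \<Longrightarrow> i < n \<Longrightarrow> 0 \<le> G y i \<and> G y i \<le> 1"
  obtains q where "\<forall>i<n. q i < p"
    and "\<forall>i<n. \<exists>a b. in_cell n q a \<and> in_cell n q b
           \<and> grid_point p a i \<le> G (grid_point p a) i \<and> G (grid_point p b) i \<le> grid_point p b i"
proof -
  have labels: "\<forall>x. (\<forall>i<n. x i \<le> p) \<longrightarrow> (\<forall>i<n. kuhn_label G p x i = 0 \<or> kuhn_label G p x i = 1)"
    "\<forall>x. (\<forall>i<n. x i \<le> p) \<longrightarrow> (\<forall>i<n. x i = 0 \<longrightarrow> kuhn_label G p x i = 0)"
    "\<forall>x. (\<forall>i<n. x i \<le> p) \<longrightarrow> (\<forall>i<n. x i = p \<longrightarrow> kuhn_label G p x i = 1)"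
    using p by (auto simp: kuhn_label_def)
  obtain q where q: "\<forall>i<n. q i < p"
    and cell: "\<forall>i<n. \<exists>r s. in_cell n q r \<and> in_cell n q s \<and> kuhn_label G p r i \<noteq> kuhn_label G p s i"
    unfolding in_cell_def by (rule kuhn_lemma[OF p labels])
  have up: "grid_point p x i \<le> G (grid_point p x) i"
    if "in_cell n q x" "kuhn_label G p x i = 0" "i < n" for x i
    using range[OF grid_point_in_unit_cube[OF p in_cell_le[OF that(1) q]] that(3)]
    by (intro kuhn_label_eq_0[OF that(2)]) simp
  have down: "G (grid_point p x) i \<le> grid_point p x i"
    if "in_cell n q x" "kuhn_label G p x i \<noteq> 0" "i < n" for x i
    using range[OF grid_point_in_unit_cube[OF p in_cell_le[OF that(1) q]] that(3)]
    by (intro kuhn_label_neq_0[OF that(2)] p) simp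
  show thesis
  proof (rule that[OF q], intro allI impI)
    fix i assume i: "i < n"
    obtain r s where r: "in_cell n q r" and s: "in_cell n q s" and rs: "kuhn_label G p r i \<noteq> kuhn_label G p s i"
      using cell[rule_format, OF i] by blast
    then consider "kuhn_label G p r i = 0" "kuhn_label G p s i \<noteq> 0"
      | "kuhn_label G p s i = 0" "kuhn_label G p r i \<noteq> 0"
      by (auto simp: kuhn_label_def split: if_splits)
    then show "\<exists>a b. in_cell n q a \<and> in_cell n q b
           \<and> grid_point p a i \<le> G (grid_point p a) i \<and> G (grid_point p b) i \<le> grid_point p b i"
      by cases (use r s i up down in blast)+
  qed
qed

lemma cube_approx_fixed_point:
  fixes G :: "(nat \<Rightarrow> real) \<Rightarrow> nat \<Rightarrow> real"
  assumes range: "\<And>y i. in_unit_cube n y \<Longrightarrow> i < n \<Longrightarrow> 0 \<le> G y i \<and> G y i \<le> 1"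
    and cont: "\<And>y z i. in_unit_cube n y \<Longrightarrow> in_unit_cube n z \<Longrightarrow> (\<forall>j<n. \<bar>y j - z j\<bar> \<le> \<delta>)
                 \<Longrightarrow> i < n \<Longrightarrow> \<bar>G y i - G z i\<bar> \<le> e"
    and \<delta>: "0 < \<delta>"
  shows "\<exists>y. in_unit_cube n y \<and> (\<forall>i<n. \<bar>G y i - y i\<bar> \<le> e + \<delta>)"
proof -
  obtain p :: nat where "1 / \<delta> < real p" using reals_Archimedean2 by blast
  then have p\<delta>: "1 < real p * \<delta>" using \<delta> by (simp add: field_simps)
  then have p: "0 < p" by (cases p) auto
  have mesh: "1 / real p \<le> \<delta>" using p p\<delta> by (simp add: divide_le_eq algebra_simps)
  obtain q where q: "\<forall>i<n. q i < p"
    and cell: "\<forall>i<n. \<exists>a b. in_cell n q a \<and> in_cell n q b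
           \<and> grid_point p a i \<le> G (grid_point p a) i \<and> G (grid_point p b) i \<le> grid_point p b i"
    by (rule kuhn_cell[OF p range])
  have y: "in_unit_cube n (grid_point p q)"
    using q by (intro grid_point_in_unit_cube p) (auto simp: less_imp_le)
  have near: "grid_point p q j \<le> grid_point p x j \<and> grid_point p x j \<le> grid_point p q j + \<delta>"
    if "in_cell n q x" "j < n" for x j
    using grid_point_in_cell[OF that p] mesh by linarith
  have close_to_y: "\<bar>G (grid_point p x) i - G (grid_point p q) i\<bar> \<le> e" if "in_cell n q x" "i < n" for x i
  proof (rule cont[OF grid_point_in_unit_cube[OF p in_cell_le[OF that(1) q]] y _ that(2)])
    show "\<forall>j<n. \<bar>grid_point p x j - grid_point p q j\<bar> \<le> \<delta>"
      using near[OF that(1)] \<delta> unfolding abs_le_iff by force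
  qed
  have "\<bar>G (grid_point p q) i - grid_point p q i\<bar> \<le> e + \<delta>" if i: "i < n" for i
  proof -
    obtain a b where a: "in_cell n q a" and b: "in_cell n q b"
      and up: "grid_point p a i \<le> G (grid_point p a) i" and down: "G (grid_point p b) i \<le> grid_point p b i"
      using cell[rule_format, OF i] by blast
    show ?thesis
      using close_to_y[OF a i] close_to_y[OF b i] near[OF a i] near[OF b i] up down
      unfolding abs_le_iff by linarith
  qed
  then show ?thesis using y by blast
qed

section \<open>Functions on the unit interval\<close>

definition unif_close :: "real \<Rightarrow> (real \<Rightarrow> real) \<Rightarrow> (real \<Rightarrow> real) \<Rightarrow> bool" where
  "unif_close e u v \<longleftrightarrow> (\<forall>x\<in>{0..1}. \<bar>u x - v x\<bar> \<le> e)"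

lemma unif_close_nonneg:
  assumes "unif_close e u v" shows "0 \<le> e"
proof -
  have "\<bar>u 0 - v 0\<bar> \<le> e" using assms by (simp add: unif_close_def)
  then show ?thesis by (meson abs_ge_zero order_trans)
qed

lemma unif_close_trans:
  assumes "unif_close e u v" "unif_close e' v w"
  shows "unif_close (e + e') u w"
  unfolding unif_close_def
proof
  fix x :: real assume "x \<in> {0..1}"
  then have "\<bar>u x - v x\<bar> \<le> e" "\<bar>v x - w x\<bar> \<le> e'" using assms by (auto simp: unif_close_def)
  then show "\<bar>u x - w x\<bar> \<le> e + e'" unfolding abs_le_iff by linarith
qed

lemma unif_close_sym: "unif_close e u v \<Longrightarrow> unif_close e v u"
  unfolding unif_close_def by (simp add: abs_minus_commute)

definition primitive :: "(real \<Rightarrow> real) \<Rightarrow> real \<Rightarrow> real" where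
  "primitive f x = integral {0..x} f"

lemma abs_integral_le:
  fixes f :: "real \<Rightarrow> real"
  assumes "continuous_on {0..1} f" "\<And>x. x \<in> {0..1} \<Longrightarrow> \<bar>f x\<bar> \<le> M" "0 \<le> a" "a \<le> b" "b \<le> 1"
  shows "\<bar>integral {a..b} f\<bar> \<le> M * (b - a)"
proof -
  have "continuous_on {a..b} f" using assms(1) by (rule continuous_on_subset) (use assms in auto)
  then show ?thesis using integral_bound[of a b f M] assms by auto
qed

lemma continuous_on_primitive: "continuous_on {0..1} f \<Longrightarrow> continuous_on {0..1} (primitive f)"
  unfolding primitive_def by (rule indefinite_integral_continuous_1[OF integrable_continuous_interval])

lemma primitive_diff:
  assumes "continuous_on {0..1} f" "0 \<le> y" "y \<le> x" "x \<le> 1"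
  shows "primitive f x - primitive f y = integral {y..x} f"
proof -
  have "continuous_on {0..x} f" using assms by (auto intro: continuous_on_subset)
  then have "integral {0..y} f + integral {y..x} f = integral {0..x} f"
    using assms by (intro Henstock_Kurzweil_Integration.integral_combine integrable_continuous_interval) auto
  then show ?thesis by (simp add: primitive_def)
qed

lemma primitive_has_real_derivative:
  "continuous_on {0..1} f \<Longrightarrow> x \<in> {0..1} \<Longrightarrow> (primitive f has_real_derivative f x) (at x within {0..1})"
  unfolding primitive_def by (rule integral_has_real_derivative)

lemma lipschitz_on_primitive:
  assumes f: "continuous_on {0..1} f" and M: "\<And>x. x \<in> {0..1} \<Longrightarrow> \<bar>f x\<bar> \<le> M"
  shows "M-lipschitz_on {0..1} (primitive f)"
proof (rule lipschitz_onI)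
  show "0 \<le> M" using M[of 0] by auto
  fix x y :: real assume "x \<in> {0..1}" "y \<in> {0..1}"
  then show "dist (primitive f x) (primitive f y) \<le> M * dist x y"
    using primitive_diff[OF f, of y x] primitive_diff[OF f, of x y] abs_integral_le[OF f M, of y x]
      abs_integral_le[OF f M, of x y]
    by (cases "y \<le> x") (auto simp: dist_real_def abs_minus_commute)
qed

lemma abs_primitive_le:
  assumes "continuous_on {0..1} f" "\<And>x. x \<in> {0..1} \<Longrightarrow> \<bar>f x\<bar> \<le> M" "x \<in> {0..1}"
  shows "\<bar>primitive f x\<bar> \<le> M"
proof -
  have "\<bar>primitive f x - primitive f 0\<bar> \<le> M * \<bar>x - 0\<bar>"
    using lipschitz_onD[OF lipschitz_on_primitive[OF assms(1,2)], of x 0] assms(3) by (simp add: dist_real_def)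
  moreover have "M * x \<le> M" using assms(3) lipschitz_on_nonneg[OF lipschitz_on_primitive[OF assms(1,2)]]
    by (simp add: mult_left_le)
  ultimately show ?thesis using assms(3) by (simp add: primitive_def)
qed

lemma unif_close_primitive:
  assumes f: "continuous_on {0..1} f" and g: "continuous_on {0..1} g" and "unif_close e f g"
  shows "unif_close e (primitive f) (primitive g)"
  unfolding unif_close_def
proof
  fix x :: real assume x: "x \<in> {0..1}"
  have "primitive f x - primitive g x = primitive (\<lambda>t. f t - g t) x"
    using x unfolding primitive_def
    by (intro integral_diff[symmetric] integrable_continuous_interval
        continuous_on_subset[OF f] continuous_on_subset[OF g]) auto
  also have "\<bar>\<dots>\<bar> \<le> e"
  proof (rule abs_primitive_le[OF _ _ x])
    show "continuous_on {0..1} (\<lambda>t. f t - g t)" by (intro continuous_intros f g)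
    show "\<bar>f t - g t\<bar> \<le> e" if "t \<in> {0..1}" for t
      using \<open>unif_close e f g\<close> that by (simp add: unif_close_def)
  qed
  finally show "\<bar>primitive f x - primitive g x\<bar> \<le> e" .
qed

lemma abs_integral_diff_le:
  assumes "continuous_on {0..1} f" "continuous_on {0..1} g" "unif_close e f g"
  shows "\<bar>integral {0..1} f - integral {0..1} g\<bar> \<le> e"
  using unif_close_primitive[OF assms] by (simp add: unif_close_def primitive_def)

definition unit_mass :: "real \<Rightarrow> (real \<Rightarrow> real) set" where
  "unit_mass M = {v. continuous_on {0..1} v \<and> (\<forall>x\<in>{0..1}. \<bar>v x\<bar> \<le> M) \<and> integral {0..1} v = 1}"

lemma unit_mass_mono: "M \<le> M' \<Longrightarrow> unit_mass M \<subseteq> unit_mass M'"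
  by (force simp: unit_mass_def)

definition normalize_mass :: "(real \<Rightarrow> real) \<Rightarrow> real \<Rightarrow> real" where
  "normalize_mass g x = g x + (1 - integral {0..1} g)"

lemma normalize_mass_in_unit_mass:
  assumes g: "continuous_on {0..1} g" and M: "\<And>x. x \<in> {0..1} \<Longrightarrow> \<bar>g x\<bar> \<le> M"
  shows "normalize_mass g \<in> unit_mass (2 * M + 1)"
proof -
  have "\<bar>integral {0..1} g\<bar> \<le> M" using abs_integral_le[OF g M, of 0 1] by simp
  then have "\<bar>normalize_mass g x\<bar> \<le> 2 * M + 1" if "x \<in> {0..1}" for x
    using M[OF that] unfolding normalize_mass_def abs_le_iff by linarith
  moreover have "continuous_on {0..1} (normalize_mass g)"
    unfolding normalize_mass_def by (intro continuous_intros g)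
  moreover have "integral {0..1} (normalize_mass g) = 1"
    unfolding normalize_mass_def by (simp add: integral_add integrable_continuous_interval g)
  ultimately show ?thesis by (simp add: unit_mass_def)
qed

lemma normalize_mass_unit_mass: "v \<in> unit_mass M \<Longrightarrow> normalize_mass v = v"
  by (simp add: unit_mass_def normalize_mass_def fun_eq_iff)

lemma unif_close_normalize_mass:
  assumes "continuous_on {0..1} g" "continuous_on {0..1} g'" "unif_close e g g'"
  shows "unif_close (2 * e) (normalize_mass g) (normalize_mass g')"
  unfolding unif_close_def
proof
  fix x :: real assume "x \<in> {0..1}"
  then have "\<bar>g x - g' x\<bar> \<le> e" using assms(3) by (simp add: unif_close_def)
  then show "\<bar>normalize_mass g x - normalize_mass g' x\<bar> \<le> 2 * e"
    using abs_integral_diff_le[OF assms] unfolding normalize_mass_def abs_le_iff by linarith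
qed

lemma lipschitz_on_normalize_mass:
  "A-lipschitz_on {0..1} g \<Longrightarrow> A-lipschitz_on {0..1} (normalize_mass g)"
  by (simp add: lipschitz_on_def normalize_mass_def dist_real_def)

lemma primitive_nonneg_bounds:
  assumes g: "continuous_on {0..1} g" "\<And>x. x \<in> {0..1} \<Longrightarrow> 0 \<le> g x" and x: "x \<in> {0..1}"
  shows "0 \<le> primitive g x" "primitive g x \<le> integral {0..1} g"
proof -
  show "0 \<le> primitive g x"
    unfolding primitive_def using g x
    by (intro integral_nonneg integrable_continuous_interval continuous_on_subset[OF g(1)]) auto
  have "0 \<le> integral {x..1} g"
    using g x by (intro integral_nonneg integrable_continuous_interval continuous_on_subset[OF g(1)]) auto
  then show "primitive g x \<le> integral {0..1} g"
    using primitive_diff[OF g(1), of x 1] x by (simp add: primitive_def)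
qed

lemma primitive_eq_0:
  assumes "\<And>x. x \<in> {0..1} \<Longrightarrow> f x = 0" "x \<in> {0..1}"
  shows "primitive f x = 0"
proof -
  have "integral {0..x} f = integral {0..x} (\<lambda>_. 0)" using assms by (intro integral_cong) auto
  then show ?thesis by (simp add: primitive_def)
qed

section \<open>Grid interpolation\<close>

definition hat :: "nat \<Rightarrow> nat \<Rightarrow> real \<Rightarrow> real" where
  "hat N i x = max 0 (1 - \<bar>real N * x - real i\<bar>)"

definition hat_sum :: "nat \<Rightarrow> real \<Rightarrow> real" where
  "hat_sum N x = (\<Sum>i\<le>N. hat N i x)"

text \<open>Dividing by \<open>hat_sum\<close>
  makes it a weighted average without having to show that the hats form a partition of unity.\<close>
definition interp :: "nat \<Rightarrow> (nat \<Rightarrow> real) \<Rightarrow> real \<Rightarrow> real" where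
  "interp N p x = (\<Sum>i\<le>N. p i * hat N i x) / hat_sum N x"

lemma hat_sum_ge_half:
  assumes "x \<in> {0..1}"
  shows "1/2 \<le> hat_sum N x"
proof -
  define i where "i = nat \<lfloor>real N * x + 1/2\<rfloor>"
  have Nx: "0 \<le> real N * x" "real N * x \<le> real N" using assms by (auto simp: mult_left_le)
  then have i: "real i = of_int \<lfloor>real N * x + 1/2\<rfloor>" by (simp add: i_def)
  then have "\<bar>real N * x - real i\<bar> \<le> 1/2" "real i < real N + 1"
    using Nx by linarith+
  then have "1/2 \<le> hat N i x" "i \<le> N" by (auto simp: hat_def)
  moreover have "hat N i x \<le> hat_sum N x"
    unfolding hat_sum_def using \<open>i \<le> N\<close> by (intro member_le_sum) (auto simp: hat_def)
  ultimately show ?thesis by linarith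
qed

lemma interp_const: "x \<in> {0..1} \<Longrightarrow> interp N (\<lambda>_. c) x = c"
  using hat_sum_ge_half[of x N] by (simp add: interp_def hat_sum_def flip: sum_distrib_left)

lemma interp_diff: "interp N p x - interp N q x = interp N (\<lambda>i. p i - q i) x"
  by (simp add: interp_def diff_divide_distrib[symmetric] sum_subtractf left_diff_distrib)

lemma abs_interp_le:
  assumes x: "x \<in> {0..1}" and p: "\<And>i. i \<le> N \<Longrightarrow> 0 < hat N i x \<Longrightarrow> \<bar>p i\<bar> \<le> M"
  shows "\<bar>interp N p x\<bar> \<le> M"
proof -
  have hat: "0 \<le> hat N i x" for i by (simp add: hat_def)
  have "\<bar>\<Sum>i\<le>N. p i * hat N i x\<bar> \<le> (\<Sum>i\<le>N. \<bar>p i * hat N i x\<bar>)" by (rule sum_abs)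
  also have "\<dots> \<le> (\<Sum>i\<le>N. M * hat N i x)"
  proof (rule sum_mono)
    fix i assume "i \<in> {..N}"
    then show "\<bar>p i * hat N i x\<bar> \<le> M * hat N i x"
      using p[of i] hat[of i] by (cases "hat N i x = 0") (auto simp: abs_mult mult_right_mono)
  qed
  also have "\<dots> = M * hat_sum N x" by (simp add: hat_sum_def sum_distrib_left)
  finally have "\<bar>\<Sum>i\<le>N. p i * hat N i x\<bar> \<le> M * hat_sum N x" .
  moreover have "0 < hat_sum N x" using hat_sum_ge_half[OF x, of N] by linarith
  ultimately show ?thesis by (simp add: interp_def divide_le_eq)
qed

lemma continuous_on_interp: "continuous_on {0..1} (interp N p)"
proof -
  have "hat_sum N x \<noteq> 0" if "x \<in> {0..1}" for x
    using hat_sum_ge_half[OF that, of N] by linarith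
  then show ?thesis unfolding interp_def hat_sum_def hat_def
    by (intro continuous_intros) auto
qed

lemma unif_close_interp:
  assumes "\<And>i. i \<le> N \<Longrightarrow> \<bar>p i - q i\<bar> \<le> e"
  shows "unif_close e (interp N p) (interp N q)"
  unfolding unif_close_def interp_diff using assms by (blast intro: abs_interp_le)

lemma interp_approx_lipschitz:
  assumes N: "0 < N" and U: "A-lipschitz_on {0..1} U"
    and p: "\<And>i. i \<le> N \<Longrightarrow> \<bar>p i - U (real i / real N)\<bar> \<le> e"
  shows "unif_close (e + A / real N) (interp N p) U"
  unfolding unif_close_def
proof
  fix x :: real assume x: "x \<in> {0..1}"
  have "\<bar>p i - U x\<bar> \<le> e + A / real N" if i: "i \<le> N" and hat: "0 < hat N i x" for i
  proof -
    have "real i / real N - x = - ((real N * x - real i) / real N)" using N by (simp add: field_simps)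
    moreover have "\<bar>real N * x - real i\<bar> < 1" using hat by (simp add: hat_def)
    ultimately have near: "\<bar>real i / real N - x\<bar> \<le> 1 / real N"
      by (simp add: divide_right_mono)
    have "real i / real N \<in> {0..1}" using i N by (auto simp: divide_le_eq_1)
    then have "\<bar>U (real i / real N) - U x\<bar> \<le> A * \<bar>real i / real N - x\<bar>"
      using lipschitz_onD[OF U, of "real i / real N" x] x by (simp add: dist_real_def)
    also have "\<dots> \<le> A * (1 / real N)"
      using near lipschitz_on_nonneg[OF U] by (rule mult_left_mono)
    finally show ?thesis using p[OF i] unfolding abs_le_iff by simp
  qed
  then have "\<bar>interp N (\<lambda>i. p i - U x) x\<bar> \<le> e + A / real N"
    by (intro abs_interp_le[OF x])
  then show "\<bar>interp N p x - U x\<bar> \<le> e + A / real N"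
    using interp_const[OF x, of N "U x"] interp_diff[of N p x "\<lambda>_. U x"] by simp
qed

section \<open>A fixed point theorem for maps of functions of unit mass\<close>

lemma unif_close_mono: "unif_close e u v \<Longrightarrow> e \<le> e' \<Longrightarrow> unif_close e' u v"
  unfolding unif_close_def by force

lemma unif_close_all_eq:
  assumes "\<And>e. 0 < e \<Longrightarrow> unif_close e u v" "x \<in> {0..1}"
  shows "u x = v x"
proof -
  have "\<bar>u x - v x\<bar> \<le> 0 + e" if "0 < e" for e
    using assms that by (simp add: unif_close_def)
  then have "\<bar>u x - v x\<bar> \<le> 0" by (rule field_le_epsilon)
  then show ?thesis by simp
qed

lemma unit_mass_closed:
  assumes g: "continuous_on {0..1} g" and approx: "\<And>e. 0 < e \<Longrightarrow> \<exists>v\<in>unit_mass M. unif_close e v g"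
  shows "g \<in> unit_mass M"
proof -
  have approx_bounds: "\<bar>g x\<bar> \<le> M + e \<and> \<bar>1 - integral {0..1} g\<bar> \<le> 0 + e"
    if x: "x \<in> {0..1}" and e: "0 < e" for x e
  proof -
    obtain v where v: "v \<in> unit_mass M" and ve: "unif_close e v g" using approx[OF e] by blast
    have "\<bar>integral {0..1} v - integral {0..1} g\<bar> \<le> e"
      using v g ve by (intro abs_integral_diff_le) (auto simp: unit_mass_def)
    moreover have "\<bar>v x\<bar> \<le> M" "\<bar>v x - g x\<bar> \<le> e" "integral {0..1} v = 1"
      using v ve x by (auto simp: unit_mass_def unif_close_def)
    ultimately show ?thesis unfolding abs_le_iff by linarith
  qed
  have "\<bar>g x\<bar> \<le> M" if "x \<in> {0..1}" for x
    by (rule field_le_epsilon) (use approx_bounds[OF that] in blast)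
  moreover have "\<bar>1 - integral {0..1} g\<bar> \<le> 0"
    by (rule field_le_epsilon) (use approx_bounds[of 0] in simp)
  ultimately show ?thesis using g by (simp add: unit_mass_def)
qed

lemma normalized_interp_in_unit_mass:
  "(\<And>i. i \<le> N \<Longrightarrow> \<bar>p i\<bar> \<le> M) \<Longrightarrow> normalize_mass (interp N p) \<in> unit_mass (2 * M + 1)"
  by (intro normalize_mass_in_unit_mass continuous_on_interp abs_interp_le) auto

lemma unif_close_normalized_interp:
  "(\<And>i. i \<le> N \<Longrightarrow> \<bar>p i - q i\<bar> \<le> e)
    \<Longrightarrow> unif_close (2 * e) (normalize_mass (interp N p)) (normalize_mass (interp N q))"
  by (intro unif_close_normalize_mass continuous_on_interp unif_close_interp)

lemma normalized_interp_approx: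
  assumes "0 < N" "U \<in> unit_mass M" "A-lipschitz_on {0..1} U"
    and "\<And>i. i \<le> N \<Longrightarrow> \<bar>p i - U (real i / real N)\<bar> \<le> e"
  shows "unif_close (2 * (e + A / real N)) (normalize_mass (interp N p)) U"
proof -
  have "unif_close (2 * (e + A / real N)) (normalize_mass (interp N p)) (normalize_mass U)"
    using assms by (intro unif_close_normalize_mass continuous_on_interp interp_approx_lipschitz)
      (auto simp: unit_mass_def)
  then show ?thesis using normalize_mass_unit_mass[OF assms(2)] by simp
qed

lemma uniformly_lipschitz_equicontinuous:
  fixes F :: "nat \<Rightarrow> real \<Rightarrow> real"
  assumes "\<And>n. A-lipschitz_on S (F n)" "x \<in> S" "0 < e"
  shows "\<exists>d. 0 < d \<and> (\<forall>n y. y \<in> S \<and> norm (x - y) < d \<longrightarrow> norm (F n x - F n y) < e)"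
proof (intro exI[of _ "e / (A + 1)"] conjI allI impI)
  have A: "0 \<le> A" using lipschitz_on_nonneg[OF assms(1)] .
  then show "0 < e / (A + 1)" using assms(3) by simp
  fix n y assume y: "y \<in> S \<and> norm (x - y) < e / (A + 1)"
  have "\<bar>F n x - F n y\<bar> \<le> A * \<bar>x - y\<bar>"
    using lipschitz_onD[OF assms(1,2), of y] y by (simp add: dist_real_def)
  also have "\<dots> \<le> A * (e / (A + 1))" using y A by (intro mult_left_mono) auto
  also have "\<dots> < e" using assms(3) A by (simp add: field_simps)
  finally show "norm (F n x - F n y) < e" by simp
qed

text \<open>The extra room \<open>M + 1\<close> in the domain is what restoring unit mass after a uniform
  perturbation of size \<open>M\<close> may cost.\<close>
locale unit_mass_map =
  fixes \<Phi> :: "(real \<Rightarrow> real) \<Rightarrow> real \<Rightarrow> real" and M A L :: real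
  assumes M_pos: "0 < M" and L_nonneg: "0 \<le> L"
    and maps_into: "\<And>v. v \<in> unit_mass (2 * M + 1) \<Longrightarrow> \<Phi> v \<in> unit_mass M"
    and lipschitz_image: "\<And>v. v \<in> unit_mass (2 * M + 1) \<Longrightarrow> A-lipschitz_on {0..1} (\<Phi> v)"
    and lipschitz_map: "\<And>u v \<delta>. u \<in> unit_mass (2 * M + 1) \<Longrightarrow> v \<in> unit_mass (2 * M + 1)
                          \<Longrightarrow> unif_close \<delta> u v \<Longrightarrow> unif_close (L * \<delta>) (\<Phi> u) (\<Phi> v)"
begin

lemma A_nonneg: "0 \<le> A"
proof -
  have "(\<lambda>_. 1) \<in> unit_mass (2 * M + 1)" using M_pos by (simp add: unit_mass_def)
  then show ?thesis using lipschitz_image lipschitz_on_nonneg by blast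
qed

lemma node_in_unit_interval: "i \<le> N \<Longrightarrow> real i / real N \<in> {0..1}"
  by (cases "N = 0") (auto simp: divide_le_eq_1)

text \<open>A point \<open>y\<close> of the cube \<open>[0,1]\<^sup>N\<^sup>+\<^sup>1\<close> encodes the grid values \<open>M (2 y\<^sub>i - 1) \<in> [-M, M]\<close>
  of a function of unit mass; \<open>grid_map\<close> samples its image under \<open>\<Phi>\<close> at the nodes and maps
  the samples back to the cube.\<close>
definition grid_fun :: "nat \<Rightarrow> (nat \<Rightarrow> real) \<Rightarrow> real \<Rightarrow> real" where
  "grid_fun N y = normalize_mass (interp N (\<lambda>i. M * (2 * y i - 1)))"

definition grid_map :: "nat \<Rightarrow> (nat \<Rightarrow> real) \<Rightarrow> nat \<Rightarrow> real" where
  "grid_map N y i = (\<Phi> (grid_fun N y) (real i / real N) / M + 1) / 2"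

lemma grid_fun_unit_mass:
  assumes "in_unit_cube (Suc N) y"
  shows "grid_fun N y \<in> unit_mass (2 * M + 1)"
  unfolding grid_fun_def
proof (rule normalized_interp_in_unit_mass)
  fix i assume "i \<le> N"
  then have "0 \<le> y i \<and> y i \<le> 1" using assms by (simp add: in_unit_cube_def less_Suc_eq_le)
  then have "\<bar>2 * y i - 1\<bar> \<le> 1" by (simp add: abs_le_iff)
  then show "\<bar>M * (2 * y i - 1)\<bar> \<le> M"
    using mult_left_mono[of "\<bar>2 * y i - 1\<bar>" 1 M] M_pos by (simp add: abs_mult)
qed

lemma grid_map_range:
  assumes "in_unit_cube (Suc N) y" "i < Suc N"
  shows "0 \<le> grid_map N y i \<and> grid_map N y i \<le> 1"
proof -
  have "\<bar>\<Phi> (grid_fun N y) (real i / real N)\<bar> \<le> M"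
    using maps_into[OF grid_fun_unit_mass[OF assms(1)]] node_in_unit_interval[of i N] assms(2)
    by (simp add: unit_mass_def)
  then show ?thesis using M_pos by (simp add: grid_map_def abs_le_iff field_simps)
qed

lemma grid_map_close:
  assumes y: "in_unit_cube (Suc N) y" and z: "in_unit_cube (Suc N) z"
    and yz: "\<forall>j<Suc N. \<bar>y j - z j\<bar> \<le> \<delta>" and i: "i < Suc N"
  shows "\<bar>grid_map N y i - grid_map N z i\<bar> \<le> 2 * L * \<delta>"
proof -
  have "\<bar>M * (2 * y j - 1) - M * (2 * z j - 1)\<bar> \<le> 2 * M * \<delta>" if "j \<le> N" for j
  proof -
    have "\<bar>y j - z j\<bar> \<le> \<delta>" using yz that by simp
    moreover have "M * (2 * y j - 1) - M * (2 * z j - 1) = 2 * M * (y j - z j)"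
      by (simp add: algebra_simps)
    ultimately show ?thesis using M_pos by (simp add: abs_mult)
  qed
  then have "unif_close (2 * (2 * M * \<delta>)) (grid_fun N y) (grid_fun N z)"
    unfolding grid_fun_def by (rule unif_close_normalized_interp)
  then have "unif_close (L * (2 * (2 * M * \<delta>))) (\<Phi> (grid_fun N y)) (\<Phi> (grid_fun N z))"
    by (rule lipschitz_map[OF grid_fun_unit_mass[OF y] grid_fun_unit_mass[OF z]])
  then have "\<bar>\<Phi> (grid_fun N y) (real i / real N) - \<Phi> (grid_fun N z) (real i / real N)\<bar> \<le> L * (2 * (2 * M * \<delta>))"
    using node_in_unit_interval[of i N] i unfolding unif_close_def by simp
  then have "\<bar>\<Phi> (grid_fun N y) (real i / real N) - \<Phi> (grid_fun N z) (real i / real N)\<bar> / (2 * M) \<le> 2 * L * \<delta>"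
    using M_pos by (simp add: divide_le_eq algebra_simps)
  moreover have "grid_map N y i - grid_map N z i
      = (\<Phi> (grid_fun N y) (real i / real N) - \<Phi> (grid_fun N z) (real i / real N)) / (2 * M)"
    using M_pos by (simp add: grid_map_def field_simps)
  ultimately show ?thesis using M_pos by (simp add: abs_divide)
qed

lemma approx_fixed_point:
  assumes e: "0 < e"
  shows "\<exists>X \<in> unit_mass (2 * M + 1). unif_close e X (\<Phi> X)"
proof -
  obtain N :: nat where "4 * A / e < real N" using reals_Archimedean2 by blast
  then have N4: "4 * A < e * real N" using e by (simp add: field_simps)
  then have N: "0 < N" using A_nonneg by (cases N) auto
  have AN: "2 * (e / 4 + A / real N) \<le> e" using N N4 by (simp add: field_simps)
  define \<delta> where "\<delta> = e / (8 * M * (2 * L + 1))"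
  have "0 < 8 * M * (2 * L + 1)" using M_pos L_nonneg by simp
  then have \<delta>: "0 < \<delta>" using e by (simp add: \<delta>_def)
  have "8 * M * (2 * L + 1) * \<delta> = e" using M_pos L_nonneg by (simp add: \<delta>_def)
  then have \<delta>_eq: "2 * M * (2 * L * \<delta> + \<delta>) = e / 4" by (simp add: algebra_simps)
  obtain y where y: "in_unit_cube (Suc N) y"
    and fixed: "\<forall>i<Suc N. \<bar>grid_map N y i - y i\<bar> \<le> 2 * L * \<delta> + \<delta>"
    using cube_approx_fixed_point[where G = "grid_map N" and e = "2 * L * \<delta>",
        OF grid_map_range grid_map_close \<delta>] by blast
  have "\<bar>M * (2 * y i - 1) - \<Phi> (grid_fun N y) (real i / real N)\<bar> \<le> e / 4" if "i \<le> N" for i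
  proof -
    have "\<bar>M * (2 * y i - 1) - \<Phi> (grid_fun N y) (real i / real N)\<bar> = 2 * M * \<bar>grid_map N y i - y i\<bar>"
      using M_pos by (simp add: grid_map_def field_simps abs_mult flip: abs_minus_commute)
    also have "\<dots> \<le> 2 * M * (2 * L * \<delta> + \<delta>)" using fixed that M_pos by simp
    finally show ?thesis using \<delta>_eq by simp
  qed
  then have "unif_close (2 * (e / 4 + A / real N)) (grid_fun N y) (\<Phi> (grid_fun N y))"
    unfolding grid_fun_def
    by (rule normalized_interp_approx[OF N maps_into[OF grid_fun_unit_mass[OF y], unfolded grid_fun_def]
          lipschitz_image[OF grid_fun_unit_mass[OF y], unfolded grid_fun_def]])
  then show ?thesis using grid_fun_unit_mass[OF y] AN by (blast intro: unif_close_mono)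
qed

lemma approx_fixed_points_accumulate:
  obtains g where "continuous_on {0..1} g"
    "\<And>e. 0 < e \<Longrightarrow> \<exists>X \<in> unit_mass (2 * M + 1). unif_close e X (\<Phi> X) \<and> unif_close e (\<Phi> X) g"
proof -
  have "\<forall>k::nat. \<exists>X \<in> unit_mass (2 * M + 1). unif_close (1 / real (Suc k)) X (\<Phi> X)"
    using approx_fixed_point by simp
  then obtain X where X: "\<And>k. X k \<in> unit_mass (2 * M + 1)"
    and X_fixed: "\<And>k. unif_close (1 / real (Suc k)) (X k) (\<Phi> (X k))"
    by metis
  obtain g s where g: "continuous_on {0..1} g" and s: "strict_mono (s :: nat \<Rightarrow> nat)"
    and conv: "\<And>e. 0 < e \<Longrightarrow> \<exists>n0. \<forall>n x. n \<ge> n0 \<and> x \<in> {0..1} \<longrightarrow> norm (\<Phi> (X (s n)) x - g x) < e"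
  proof (rule Arzela_Ascoli[of "{0..1}" "\<lambda>k. \<Phi> (X k)" M])
    show "norm (\<Phi> (X n) x) \<le> M" if "x \<in> {0..1}" for n x
      using maps_into[OF X] that by (simp add: unit_mass_def)
    show "\<exists>d. 0 < d \<and> (\<forall>n y. y \<in> {0..1} \<and> norm (x - y) < d \<longrightarrow> norm (\<Phi> (X n) x - \<Phi> (X n) y) < e)"
      if "x \<in> {0..1}" "0 < e" for x e
      by (rule uniformly_lipschitz_equicontinuous[OF lipschitz_image[OF X] that])
  qed auto
  have "\<exists>X \<in> unit_mass (2 * M + 1). unif_close e X (\<Phi> X) \<and> unif_close e (\<Phi> X) g" if e: "0 < e" for e
  proof -
    obtain n0 where n0: "\<forall>n x. n \<ge> n0 \<and> x \<in> {0..1} \<longrightarrow> norm (\<Phi> (X (s n)) x - g x) < e"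
      using conv[OF e] by blast
    obtain k :: nat where k: "1 / e < real k" using reals_Archimedean2 by blast
    define n where "n = max n0 k"
    have "unif_close e (\<Phi> (X (s n))) g" using n0 by (auto simp: unif_close_def n_def less_imp_le)
    moreover have "k \<le> s n" using seq_suble[OF s, of n] by (simp add: n_def)
    then have "e * real k \<le> e * real (Suc (s n))" using e by simp
    then have "1 / real (Suc (s n)) \<le> e" using k e by (simp add: field_simps)
    then have "unif_close e (X (s n)) (\<Phi> (X (s n)))" by (rule unif_close_mono[OF X_fixed])
    ultimately show ?thesis using X by blast
  qed
  then show thesis using that g by blast
qed

lemma fixed_point: "\<exists>u \<in> unit_mass (2 * M + 1). \<forall>x\<in>{0..1}. \<Phi> u x = u x"
proof -
  obtain g where g: "continuous_on {0..1} g"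
    and approx: "\<And>e. 0 < e \<Longrightarrow> \<exists>X \<in> unit_mass (2 * M + 1). unif_close e X (\<Phi> X) \<and> unif_close e (\<Phi> X) g"
    using approx_fixed_points_accumulate by blast
  have "g \<in> unit_mass M"
    by (rule unit_mass_closed[OF g]) (use approx maps_into in blast)
  moreover have "unit_mass M \<subseteq> unit_mass (2 * M + 1)" using M_pos by (intro unit_mass_mono) simp
  ultimately have g_dom: "g \<in> unit_mass (2 * M + 1)" by blast
  have "unif_close e (\<Phi> g) g" if e: "0 < e" for e
  proof -
    define e' where "e' = e / (2 * L + 1)"
    have "0 < e'" "(2 * L + 1) * e' = e" using e L_nonneg by (auto simp: e'_def)
    then have e': "0 < e'" "L * (e' + e') + e' = e" by (simp_all add: algebra_simps)
    obtain X where X: "X \<in> unit_mass (2 * M + 1)" "unif_close e' X (\<Phi> X)" "unif_close e' (\<Phi> X) g"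
      using approx[OF e'(1)] by blast
    have "unif_close (L * (e' + e')) (\<Phi> X) (\<Phi> g)"
      by (rule lipschitz_map[OF X(1) g_dom unif_close_trans[OF X(2,3)]])
    then have "unif_close (L * (e' + e') + e') (\<Phi> g) g" by (rule unif_close_trans[OF unif_close_sym X(3)])
    then show ?thesis using e'(2) by simp
  qed
  then show ?thesis using g_dom unif_close_all_eq by blast
qed

end

section \<open>A minimum principle\<close>

lemma integral_pos_continuous:
  fixes g :: "real \<Rightarrow> real"
  assumes "a < b" "continuous_on {a..b} g" "\<And>t. t \<in> {a..b} \<Longrightarrow> 0 \<le> g t" "t0 \<in> {a..b}" "0 < g t0"
  shows "0 < integral {a..b} g"
proof -
  have "0 \<le> integral {a..b} g" using assms by (intro integral_nonneg integrable_continuous_interval) auto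
  moreover have "integral {a..b} g \<noteq> 0" using integral_eq_0_iff[of a b g] assms by auto
  ultimately show ?thesis by linarith
qed

lemma primitive_less_of_neg:
  assumes f: "continuous_on {0..1} f" and ab: "0 \<le> a" "a < t" "t \<le> 1"
    and neg: "\<And>s. s \<in> {a..t} \<Longrightarrow> f s < 0"
  shows "primitive f t < primitive f a"
proof -
  have "0 < integral {a..t} (\<lambda>s. - f s)"
    using ab neg by (intro integral_pos_continuous[of a t _ t] continuous_intros continuous_on_subset[OF f])
      (auto simp: less_imp_le)
  then show ?thesis using primitive_diff[OF f, of a t] ab by simp
qed

text \<open>\<open>U\<close> is the potential with \<open>(d U')' = f\<close> and \<open>d U' = primitive f\<close>.\<close>
lemma potential_decreasing:
  fixes f d :: "real \<Rightarrow> real"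
  defines "U \<equiv> primitive (\<lambda>t. primitive f t / d t)"
  assumes f: "continuous_on {0..1} f" and d: "continuous_on {0..1} d" "\<And>x. x \<in> {0..1} \<Longrightarrow> 0 < d x"
    and ab: "0 \<le> a" "a < b" "b \<le> 1" and neg: "\<And>t. t \<in> {a..b} \<Longrightarrow> f t < 0"
    and flux: "primitive f a \<le> 0"
  shows "U b < U a"
proof -
  have cont: "continuous_on {0..1} (\<lambda>t. primitive f t / d t)"
    using d(2) by (intro continuous_intros continuous_on_primitive f d(1)) (metis less_irrefl)
  have "primitive f t / d t < 0" if "t \<in> {a<..b}" for t
    using primitive_less_of_neg[OF f, of a t] neg flux d(2)[of t] that ab by (auto simp: divide_neg_pos)
  moreover have "primitive f a / d a \<le> 0" using flux d(2)[of a] ab by (simp add: divide_nonpos_pos)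
  ultimately have "0 < integral {a..b} (\<lambda>t. - (primitive f t / d t))"
    using ab by (intro integral_pos_continuous[of a b _ b] continuous_intros continuous_on_subset[OF cont])
      (auto simp: le_less)
  then show ?thesis using primitive_diff[OF cont, of a b] ab by (simp add: U_def)
qed

lemma potential_increasing:
  fixes f d :: "real \<Rightarrow> real"
  defines "U \<equiv> primitive (\<lambda>t. primitive f t / d t)"
  assumes f: "continuous_on {0..1} f" and d: "continuous_on {0..1} d" "\<And>x. x \<in> {0..1} \<Longrightarrow> 0 < d x"
    and ab: "0 \<le> a" "a < b" "b \<le> 1" and neg: "\<And>t. t \<in> {a..b} \<Longrightarrow> f t < 0"
    and flux: "0 \<le> primitive f b"
  shows "U a < U b"
proof -
  have cont: "continuous_on {0..1} (\<lambda>t. primitive f t / d t)"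
    using d(2) by (intro continuous_intros continuous_on_primitive f d(1)) (metis less_irrefl)
  have "0 < primitive f t / d t" if "t \<in> {a..<b}" for t
    using primitive_less_of_neg[OF f, of t b] neg flux d(2)[of t] that ab by auto
  moreover have "0 \<le> primitive f b / d b" using flux d(2)[of b] ab by simp
  ultimately have "0 < integral {a..b} (\<lambda>t. primitive f t / d t)"
    using ab by (intro integral_pos_continuous[of a b _ a] continuous_on_subset[OF cont])
      (auto simp: le_less)
  then show ?thesis using primitive_diff[OF cont, of a b] ab by (simp add: U_def)
qed

text \<open>Minimum principle for \<open>(d U')' = f\<close> with Neumann conditions, which for \<open>d U' = primitive f\<close>
  amount to \<open>\<integral>f = 0\<close>.\<close>
lemma neumann_minimum_principle:
  fixes f d :: "real \<Rightarrow> real"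
  defines "U \<equiv> primitive (\<lambda>t. primitive f t / d t)"
  assumes f: "continuous_on {0..1} f" "integral {0..1} f = 0"
    and d: "continuous_on {0..1} d" "\<And>x. x \<in> {0..1} \<Longrightarrow> 0 < d x"
    and x0: "x0 \<in> {0..1}" and min: "\<And>y. y \<in> {0..1} \<Longrightarrow> U x0 \<le> U y"
  shows "0 \<le> f x0"
proof (rule ccontr)
  assume "\<not> 0 \<le> f x0"
  then obtain \<delta> where \<delta>: "0 < \<delta>" and neg: "\<And>t. t \<in> {0..1} \<Longrightarrow> \<bar>t - x0\<bar> < \<delta> \<Longrightarrow> f t < 0"
    using continuous_on_iff[THEN iffD1, OF f(1), rule_format, OF x0, of "- f x0"] x0
    by (force simp: dist_real_def abs_less_iff)
  consider "x0 < 1" "primitive f x0 \<le> 0" | "0 < x0" "0 \<le> primitive f x0"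
    using x0 f(2) by (force simp: primitive_def)
  then show False
  proof cases
    case 1
    define b where "b = min (x0 + \<delta> / 2) 1"
    have "U b < U x0" unfolding U_def
      using 1 x0 \<delta> neg by (intro potential_decreasing f d) (auto simp: b_def)
    then show False using min[of b] x0 \<delta> 1 by (auto simp: b_def)
  next
    case 2
    define a where "a = max (x0 - \<delta> / 2) 0"
    have "U a < U x0" unfolding U_def
      using 2 x0 \<delta> neg by (intro potential_increasing f d) (auto simp: a_def)
    then show False using min[of a] x0 \<delta> 2 by (auto simp: a_def)
  qed
qed

section \<open>Densities\<close>

lemma abs_quotient_diff_le:
  fixes a1 a2 k1 k2 b R e1 e2 :: real
  assumes b: "0 < b" "b \<le> k1" "b \<le> k2" and a2: "0 \<le> a2" "a2 \<le> R"
    and e: "\<bar>a1 - a2\<bar> \<le> e1" "\<bar>k1 - k2\<bar> \<le> e2"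
  shows "\<bar>a1 / k1 - a2 / k2\<bar> \<le> e1 / b + R * e2 / b\<^sup>2"
proof -
  have "a1 / k1 - a2 / k2 = (a1 - a2) / k1 + a2 * (k2 - k1) / (k1 * k2)"
    using b by (simp add: field_simps)
  moreover have "\<bar>(a1 - a2) / k1\<bar> \<le> e1 / b"
    using b e(1) frac_le[of e1 "\<bar>a1 - a2\<bar>" b k1] by simp
  moreover have "\<bar>a2 * (k2 - k1) / (k1 * k2)\<bar> \<le> R * e2 / b\<^sup>2"
  proof -
    have "a2 * \<bar>k2 - k1\<bar> \<le> R * e2" using a2 e(2) by (intro mult_mono) (auto simp: abs_minus_commute)
    moreover have "b\<^sup>2 \<le> k1 * k2" using b by (simp add: power2_eq_square mult_mono)
    moreover have "0 \<le> R * e2" using a2 e(2) by (meson abs_ge_zero order_trans mult_nonneg_nonneg)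
    ultimately have "a2 * \<bar>k2 - k1\<bar> / (k1 * k2) \<le> R * e2 / b\<^sup>2"
      using b by (intro frac_le) auto
    then show ?thesis using b a2 by (simp add: abs_mult)
  qed
  ultimately show ?thesis by (smt (verit, best) abs_triangle_ineq)
qed

definition densities :: "real \<Rightarrow> (real \<Rightarrow> real) set" where
  "densities C = {w \<in> unit_mass C. \<forall>x\<in>{0..1}. 0 \<le> w x}"

definition normalize_pos :: "(real \<Rightarrow> real) \<Rightarrow> real \<Rightarrow> real" where
  "normalize_pos v x = max (v x) 0 / integral {0..1} (\<lambda>y. max (v y) 0)"

lemma pos_part_mass_ge:
  assumes "v \<in> unit_mass C"
  shows "1 \<le> integral {0..1} (\<lambda>y. max (v y) 0)"
proof -
  have "continuous_on {0..1} v" "integral {0..1} v = 1" using assms by (auto simp: unit_mass_def)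
  moreover have "integral {0..1} v \<le> integral {0..1} (\<lambda>y. max (v y) 0)"
    using \<open>continuous_on {0..1} v\<close>
    by (intro integral_le integrable_continuous_interval continuous_intros) auto
  ultimately show ?thesis by simp
qed

lemma normalize_pos_densities:
  assumes v: "v \<in> unit_mass C"
  shows "normalize_pos v \<in> densities C"
proof -
  define m where "m = integral {0..1} (\<lambda>y. max (v y) 0)"
  have m: "1 \<le> m" using pos_part_mass_ge[OF v] by (simp add: m_def)
  have cont: "continuous_on {0..1} v" and bound: "\<And>x. x \<in> {0..1} \<Longrightarrow> \<bar>v x\<bar> \<le> C"
    using v by (auto simp: unit_mass_def)
  have "0 \<le> normalize_pos v x \<and> normalize_pos v x \<le> C" if "x \<in> {0..1}" for x
  proof -
    have "max (v x) 0 / m \<le> max (v x) 0" using m by (simp add: divide_le_eq mult_le_cancel_left1)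
    then show ?thesis using bound[OF that] m by (auto simp: normalize_pos_def m_def)
  qed
  moreover have "continuous_on {0..1} (normalize_pos v)"
    unfolding normalize_pos_def using m by (intro continuous_intros cont) (auto simp: m_def)
  moreover have "integral {0..1} (normalize_pos v) = 1"
    using m by (simp add: normalize_pos_def[abs_def] m_def)
  ultimately show ?thesis by (auto simp: densities_def unit_mass_def)
qed

lemma normalize_pos_eq:
  assumes "v \<in> unit_mass C" "\<And>x. x \<in> {0..1} \<Longrightarrow> 0 \<le> v x" "x \<in> {0..1}"
  shows "normalize_pos v x = v x"
proof -
  have "integral {0..1} (\<lambda>y. max (v y) 0) = integral {0..1} v"
    using assms(2) by (intro integral_cong) auto
  then show ?thesis using assms by (simp add: normalize_pos_def unit_mass_def)
qed

lemma unif_close_normalize_pos: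
  assumes u: "u \<in> unit_mass C" and v: "v \<in> unit_mass C" and uv: "unif_close \<delta> u v"
  shows "unif_close ((1 + C) * \<delta>) (normalize_pos u) (normalize_pos v)"
  unfolding unif_close_def
proof
  fix x :: real assume x: "x \<in> {0..1}"
  define mu where "mu = integral {0..1} (\<lambda>y. max (u y) 0)"
  define mv where "mv = integral {0..1} (\<lambda>y. max (v y) 0)"
  have mu: "1 \<le> mu" and mv: "1 \<le> mv" using pos_part_mass_ge u v by (auto simp: mu_def mv_def)
  have pos_close: "unif_close \<delta> (\<lambda>y. max (u y) 0) (\<lambda>y. max (v y) 0)"
    using uv by (auto simp: unif_close_def)
  have "\<bar>mu - mv\<bar> \<le> \<delta>"
    unfolding mu_def mv_def using u v pos_close
    by (intro abs_integral_diff_le) (auto simp: unit_mass_def intro!: continuous_intros)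
  moreover have a: "\<bar>max (u x) 0 - max (v x) 0\<bar> \<le> \<delta>" using pos_close x by (simp add: unif_close_def)
  moreover have "\<bar>v x\<bar> \<le> C" using v x by (simp add: unit_mass_def)
  then have b: "0 \<le> max (v x) 0" "max (v x) 0 \<le> C" by auto
  ultimately have "\<bar>max (u x) 0 / mu - max (v x) 0 / mv\<bar> \<le> \<delta> / 1 + C * \<delta> / 1\<^sup>2"
    using mu mv by (intro abs_quotient_diff_le) auto
  then show "\<bar>normalize_pos u x - normalize_pos v x\<bar> \<le> (1 + C) * \<delta>"
    by (simp add: normalize_pos_def mu_def mv_def algebra_simps)
qed

lemma density_sq_integral_bounds:
  assumes "w \<in> densities C"
  shows "1 \<le> integral {0..1} (\<lambda>y. (w y)\<^sup>2)" "integral {0..1} (\<lambda>y. (w y)\<^sup>2) \<le> C"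
proof -
  have w: "continuous_on {0..1} w" "integral {0..1} w = 1"
    and bounds: "\<And>x. x \<in> {0..1} \<Longrightarrow> 0 \<le> w x \<and> w x \<le> C"
    using assms by (auto simp: densities_def unit_mass_def)
  have "0 \<le> integral {0..1} (\<lambda>y. (w y - 1)\<^sup>2)"
    by (intro integral_nonneg integrable_continuous_interval continuous_intros w) auto
  also have "integral {0..1} (\<lambda>y. (w y - 1)\<^sup>2) = integral {0..1} (\<lambda>y. (w y)\<^sup>2) - 2 * integral {0..1} w + 1"
  proof -
    have "(\<lambda>y. (w y - 1)\<^sup>2) = (\<lambda>y. ((w y)\<^sup>2 - 2 * w y) + 1)" by (auto simp: power2_eq_square algebra_simps)
    then show ?thesis
      by (simp add: integral_add integral_diff integrable_continuous_interval continuous_intros w)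
  qed
  finally show "1 \<le> integral {0..1} (\<lambda>y. (w y)\<^sup>2)" using w by simp
  have "integral {0..1} (\<lambda>y. (w y)\<^sup>2) \<le> integral {0..1} (\<lambda>y. C * w y)"
    using bounds by (intro integral_le integrable_continuous_interval continuous_intros w)
      (auto simp: power2_eq_square mult_right_mono)
  then show "integral {0..1} (\<lambda>y. (w y)\<^sup>2) \<le> C" using w by simp
qed

section \<open>The fixed-point map of the model\<close>

definition steady_state ::
  "(real \<Rightarrow> real \<Rightarrow> real) \<Rightarrow> (real \<Rightarrow> real) \<Rightarrow> (real \<Rightarrow> real) \<Rightarrow> real \<Rightarrow> (real \<Rightarrow> real) \<Rightarrow> (real \<Rightarrow> real) \<Rightarrow> bool"
where
  "steady_state \<beta> d \<rho> S v v' \<longleftrightarrow>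
     (\<forall>x\<in>{0..1}. 0 < v x)
   \<and> (\<forall>x\<in>{0..1}. (v has_real_derivative v' x) (at x within {0..1}))
   \<and> continuous_on {0..1} v'
   \<and> v' 0 = 0 \<and> v' 1 = 0
   \<and> (\<forall>x\<in>{0<..<1}.
        ((\<lambda>t. d t * v' t) has_real_derivative
           (\<rho> x * v x - S * integral {0..1} (\<lambda>y. \<beta> x y * (v y)\<^sup>2))) (at x))
   \<and> integral {0..1} (\<lambda>x. \<rho> x * v x)
       - S * integral {0..1} (\<lambda>x. integral {0..1} (\<lambda>y. \<beta> x y * (v y)\<^sup>2)) = 0"

locale nonlocal_model =
  fixes \<beta> :: "real \<Rightarrow> real \<Rightarrow> real" and \<rho> d :: "real \<Rightarrow> real" and b0 b1 R d0 :: real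
  assumes \<beta>_cont: "continuous_on ({0..1} \<times> {0..1}) (\<lambda>(x, y). \<beta> x y)"
    and b0_pos: "0 < b0"
    and \<beta>_bounds: "\<And>x y. x \<in> {0..1} \<Longrightarrow> y \<in> {0..1} \<Longrightarrow> b0 \<le> \<beta> x y \<and> \<beta> x y \<le> b1"
    and \<rho>_cont: "continuous_on {0..1} \<rho>"
    and \<rho>_bounds: "\<And>x. x \<in> {0..1} \<Longrightarrow> 0 \<le> \<rho> x \<and> \<rho> x \<le> R"
    and \<rho>_nonzero: "\<exists>x\<in>{0..1}. 0 < \<rho> x"
    and d_cont: "continuous_on {0..1} d"
    and d0_pos: "0 < d0"
    and d_lower: "\<And>x. x \<in> {0..1} \<Longrightarrow> d0 \<le> d x"
begin

definition nonlocal_term :: "(real \<Rightarrow> real) \<Rightarrow> real \<Rightarrow> real" where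
  "nonlocal_term w x = integral {0..1} (\<lambda>y. \<beta> x y * (w y)\<^sup>2)"

text \<open>\<open>balance w\<close> is the factor making \<open>\<integral> source w = 0\<close>, the solvability condition of the Neumann
  problem \<open>(d v')' = source w\<close>.\<close>
definition balance :: "(real \<Rightarrow> real) \<Rightarrow> real" where
  "balance w = integral {0..1} (\<lambda>x. \<rho> x * w x) / integral {0..1} (nonlocal_term w)"

definition source :: "(real \<Rightarrow> real) \<Rightarrow> real \<Rightarrow> real" where
  "source w x = \<rho> x * w x - balance w * nonlocal_term w x"

definition flux :: "(real \<Rightarrow> real) \<Rightarrow> real \<Rightarrow> real" where
  "flux w x = primitive (source w) x / d x"

definition \<Phi> :: "(real \<Rightarrow> real) \<Rightarrow> real \<Rightarrow> real" where
  "\<Phi> v = normalize_mass (primitive (flux (normalize_pos v)))"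

lemma R_nonneg: "0 \<le> R"
  using \<rho>_bounds[of 0] by auto

lemma d_pos: "x \<in> {0..1} \<Longrightarrow> 0 < d x"
  using d_lower d0_pos by (meson less_le_trans)

lemma d_nonzero: "x \<in> {0..1} \<Longrightarrow> d x \<noteq> 0"
  using d_pos[of x] by simp

lemma continuous_on_nonlocal_term:
  assumes "continuous_on {0..1} w"
  shows "continuous_on {0..1} (nonlocal_term w)"
proof -
  have "continuous_on ({0..1} \<times> {0..1}) (\<lambda>z. w (snd z))"
    by (rule continuous_on_compose2[OF assms continuous_on_snd]) auto
  then have "continuous_on ({0..1} \<times> {0..1}) (\<lambda>(x, y). \<beta> x y * (w y)\<^sup>2)"
    using \<beta>_cont unfolding case_prod_unfold by (intro continuous_intros)
  then have "continuous_on {0..1} (\<lambda>x. integral (cbox 0 1) (\<lambda>y. \<beta> x y * (w y)\<^sup>2))"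
    by (intro integral_continuous_on_param) (simp add: cbox_interval)
  then show ?thesis by (simp add: nonlocal_term_def[abs_def] cbox_interval)
qed

lemma continuous_on_\<beta>_slice:
  assumes "x \<in> {0..1}"
  shows "continuous_on {0..1} (\<lambda>y. \<beta> x y)"
proof -
  have "(\<lambda>y. (x, y)) ` {0..1} \<subseteq> {0..1} \<times> {0..1}" using assms by auto
  then show ?thesis
    using continuous_on_compose2[OF \<beta>_cont, of "{0..1}" "\<lambda>y. (x, y)"] by (simp add: continuous_intros)
qed

lemma nonlocal_term_bounds:
  assumes w: "w \<in> densities C" and x: "x \<in> {0..1}"
  shows "b0 \<le> nonlocal_term w x" "nonlocal_term w x \<le> b1 * C"
proof -
  have cont: "continuous_on {0..1} w" using w by (simp add: densities_def unit_mass_def)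
  have "b0 * integral {0..1} (\<lambda>y. (w y)\<^sup>2) \<le> nonlocal_term w x"
    unfolding nonlocal_term_def using \<beta>_bounds[OF x]
    by (auto simp flip: integral_mult_right intro!: integral_le integrable_continuous_interval
        continuous_intros cont continuous_on_\<beta>_slice[OF x] mult_right_mono)
  then show "b0 \<le> nonlocal_term w x"
    using mult_left_mono[OF density_sq_integral_bounds(1)[OF w], of b0] b0_pos by linarith
  have "nonlocal_term w x \<le> b1 * integral {0..1} (\<lambda>y. (w y)\<^sup>2)"
    unfolding nonlocal_term_def using \<beta>_bounds[OF x]
    by (auto simp flip: integral_mult_right intro!: integral_le integrable_continuous_interval
        continuous_intros cont continuous_on_\<beta>_slice[OF x] mult_right_mono)
  moreover have "0 \<le> b1" using \<beta>_bounds[of 0 0] b0_pos by auto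
  ultimately show "nonlocal_term w x \<le> b1 * C"
    using density_sq_integral_bounds(2)[OF w] mult_left_mono[of _ C b1] by (meson order_trans)
qed

lemma unif_close_nonlocal_term:
  assumes w1: "w1 \<in> densities C" and w2: "w2 \<in> densities C" and close: "unif_close \<delta> w1 w2"
  shows "unif_close (2 * b1 * C * \<delta>) (nonlocal_term w1) (nonlocal_term w2)"
  unfolding unif_close_def
proof
  fix x :: real assume x: "x \<in> {0..1}"
  have c1: "continuous_on {0..1} w1" and c2: "continuous_on {0..1} w2"
    using w1 w2 by (auto simp: densities_def unit_mass_def)
  have "nonlocal_term w1 x - nonlocal_term w2 x = integral {0..1} (\<lambda>y. \<beta> x y * ((w1 y)\<^sup>2 - (w2 y)\<^sup>2))"
    unfolding nonlocal_term_def right_diff_distrib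
    by (intro integral_diff[symmetric] integrable_continuous_interval continuous_intros continuous_on_\<beta>_slice c1 c2 x)
  moreover have "\<bar>\<beta> x y * ((w1 y)\<^sup>2 - (w2 y)\<^sup>2)\<bar> \<le> 2 * b1 * C * \<delta>" if y: "y \<in> {0..1}" for y
  proof -
    have "0 \<le> w1 y" "w1 y \<le> C" "0 \<le> w2 y" "w2 y \<le> C" "\<bar>w1 y - w2 y\<bar> \<le> \<delta>"
      using w1 w2 close y by (auto simp: densities_def unit_mass_def unif_close_def)
    then have "\<bar>w1 y - w2 y\<bar> * (w1 y + w2 y) \<le> \<delta> * (2 * C)" by (intro mult_mono) auto
    moreover have "(w1 y)\<^sup>2 - (w2 y)\<^sup>2 = (w1 y - w2 y) * (w1 y + w2 y)" by (simp add: power2_eq_square algebra_simps)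
    ultimately have "\<bar>(w1 y)\<^sup>2 - (w2 y)\<^sup>2\<bar> \<le> \<delta> * (2 * C)"
      using \<open>0 \<le> w1 y\<close> \<open>0 \<le> w2 y\<close> by (simp add: abs_mult)
    have "\<bar>\<beta> x y * ((w1 y)\<^sup>2 - (w2 y)\<^sup>2)\<bar> = \<beta> x y * \<bar>(w1 y)\<^sup>2 - (w2 y)\<^sup>2\<bar>"
      using \<beta>_bounds[OF x y] b0_pos by (simp add: abs_mult)
    also have "\<dots> \<le> b1 * (\<delta> * (2 * C))"
      using \<open>\<bar>(w1 y)\<^sup>2 - (w2 y)\<^sup>2\<bar> \<le> \<delta> * (2 * C)\<close> \<beta>_bounds[OF x y] b0_pos by (intro mult_mono) auto
    finally show ?thesis by (simp add: algebra_simps)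
  qed
  then have "\<bar>integral {0..1} (\<lambda>y. \<beta> x y * ((w1 y)\<^sup>2 - (w2 y)\<^sup>2))\<bar> \<le> 2 * b1 * C * \<delta> * (1 - 0)"
    by (intro abs_integral_le continuous_intros continuous_on_\<beta>_slice c1 c2 x) auto
  ultimately show "\<bar>nonlocal_term w1 x - nonlocal_term w2 x\<bar> \<le> 2 * b1 * C * \<delta>" by simp
qed

lemma integral_nonlocal_term_bounds:
  assumes "w \<in> densities C"
  shows "b0 \<le> integral {0..1} (nonlocal_term w)" "integral {0..1} (nonlocal_term w) \<le> b1 * C"
proof -
  have cont: "continuous_on {0..1} (nonlocal_term w)"
    using assms by (intro continuous_on_nonlocal_term) (simp add: densities_def unit_mass_def)
  have "integral {0..1} (\<lambda>_::real. b0) \<le> integral {0..1} (nonlocal_term w)"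
    by (intro integral_le integrable_continuous_interval continuous_intros cont)
      (use nonlocal_term_bounds(1)[OF assms] in auto)
  then show "b0 \<le> integral {0..1} (nonlocal_term w)" by simp
  have "integral {0..1} (nonlocal_term w) \<le> integral {0..1} (\<lambda>_::real. b1 * C)"
    by (intro integral_le integrable_continuous_interval continuous_intros cont)
      (use nonlocal_term_bounds(2)[OF assms] in auto)
  then show "integral {0..1} (nonlocal_term w) \<le> b1 * C" by simp
qed

lemma decay_integral_bounds:
  assumes "w \<in> densities C"
  shows "0 \<le> integral {0..1} (\<lambda>x. \<rho> x * w x)" "integral {0..1} (\<lambda>x. \<rho> x * w x) \<le> R"
proof -
  have w: "continuous_on {0..1} w" "integral {0..1} w = 1" "\<And>x. x \<in> {0..1} \<Longrightarrow> 0 \<le> w x"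
    using assms by (auto simp: densities_def unit_mass_def)
  show "0 \<le> integral {0..1} (\<lambda>x. \<rho> x * w x)"
    using w \<rho>_bounds by (intro integral_nonneg integrable_continuous_interval continuous_intros \<rho>_cont) auto
  have "integral {0..1} (\<lambda>x. \<rho> x * w x) \<le> integral {0..1} (\<lambda>x. R * w x)"
    using w \<rho>_bounds
    by (intro integral_le integrable_continuous_interval continuous_intros \<rho>_cont) (auto intro: mult_right_mono)
  then show "integral {0..1} (\<lambda>x. \<rho> x * w x) \<le> R" using w by simp
qed

lemma balance_bounds:
  assumes "w \<in> densities C"
  shows "0 \<le> balance w" "balance w \<le> R / b0"
  using decay_integral_bounds[OF assms] integral_nonlocal_term_bounds[OF assms] b0_pos
  by (auto simp: balance_def intro: frac_le)

lemma continuous_on_source: "w \<in> densities C \<Longrightarrow> continuous_on {0..1} (source w)"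
  unfolding source_def[abs_def]
  by (intro continuous_intros \<rho>_cont continuous_on_nonlocal_term) (auto simp: densities_def unit_mass_def)

lemma decay_integral_eq_balance:
  assumes "w \<in> densities C"
  shows "integral {0..1} (\<lambda>x. \<rho> x * w x) = balance w * integral {0..1} (nonlocal_term w)"
  using integral_nonlocal_term_bounds(1)[OF assms] b0_pos by (simp add: balance_def)

lemma b1_nonneg: "0 \<le> b1"
  using \<beta>_bounds[of 0 0] b0_pos by auto

lemma primitive_source:
  assumes w: "w \<in> densities C" and x: "x \<in> {0..1}"
  shows "primitive (source w) x
    = primitive (\<lambda>x. \<rho> x * w x) x - balance w * primitive (nonlocal_term w) x"
proof -
  have "continuous_on {0..1} w" using w by (simp add: densities_def unit_mass_def)
  then have c1: "continuous_on {0..x} (\<lambda>x. \<rho> x * w x)" and c2: "continuous_on {0..x} (nonlocal_term w)"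
    using x by (auto intro!: continuous_intros continuous_on_nonlocal_term \<rho>_cont intro: continuous_on_subset)
  have "integral {0..x} (source w)
      = integral {0..x} (\<lambda>x. \<rho> x * w x) - integral {0..x} (\<lambda>x. balance w * nonlocal_term w x)"
    unfolding source_def[abs_def]
    by (intro integral_diff integrable_continuous_interval c1 continuous_on_mult_left c2)
  then show ?thesis by (simp add: primitive_def)
qed

text \<open>Both terms of \<open>primitive (source w)\<close> lie between \<open>0\<close> and \<open>\<integral>\<rho> w \<le> R\<close>.\<close>
lemma abs_primitive_source_le:
  assumes w: "w \<in> densities C" and x: "x \<in> {0..1}"
  shows "\<bar>primitive (source w) x\<bar> \<le> R"
proof -
  have w_cont: "continuous_on {0..1} w" and w_nonneg: "\<And>x. x \<in> {0..1} \<Longrightarrow> 0 \<le> w x"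
    using w by (auto simp: densities_def unit_mass_def)
  have K: "continuous_on {0..1} (nonlocal_term w)" "\<And>x. x \<in> {0..1} \<Longrightarrow> 0 \<le> nonlocal_term w x"
    using continuous_on_nonlocal_term[OF w_cont] nonlocal_term_bounds(1)[OF w] b0_pos by force+
  have "0 \<le> primitive (\<lambda>x. \<rho> x * w x) x" "primitive (\<lambda>x. \<rho> x * w x) x \<le> integral {0..1} (\<lambda>x. \<rho> x * w x)"
    using \<rho>_bounds w_nonneg x by (intro primitive_nonneg_bounds continuous_intros \<rho>_cont w_cont; simp)+
  moreover have "0 \<le> balance w * primitive (nonlocal_term w) x"
    "balance w * primitive (nonlocal_term w) x \<le> balance w * integral {0..1} (nonlocal_term w)"
    using balance_bounds(1)[OF w] primitive_nonneg_bounds[OF K x] by (auto intro: mult_left_mono)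
  ultimately show ?thesis
    using primitive_source[OF w x] decay_integral_eq_balance[OF w] decay_integral_bounds(2)[OF w]
    unfolding abs_le_iff by linarith
qed

lemma integral_source:
  assumes "w \<in> densities C"
  shows "integral {0..1} (source w) = 0"
  using primitive_source[OF assms, of 1] decay_integral_eq_balance[OF assms] by (simp add: primitive_def)

lemma balance_lipschitz:
  assumes w1: "w1 \<in> densities C" and w2: "w2 \<in> densities C" and close: "unif_close \<delta> w1 w2"
  shows "\<bar>balance w1 - balance w2\<bar> \<le> (R / b0 + R * (2 * b1 * C) / b0\<^sup>2) * \<delta>"
proof -
  have c: "continuous_on {0..1} w1" "continuous_on {0..1} w2"
    using w1 w2 by (auto simp: densities_def unit_mass_def)
  have "unif_close (R * \<delta>) (\<lambda>x. \<rho> x * w1 x) (\<lambda>x. \<rho> x * w2 x)"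
    unfolding unif_close_def
  proof
    fix x :: real assume x: "x \<in> {0..1}"
    have "\<bar>\<rho> x * w1 x - \<rho> x * w2 x\<bar> = \<rho> x * \<bar>w1 x - w2 x\<bar>"
      using \<rho>_bounds[OF x] by (simp add: abs_mult flip: right_diff_distrib)
    also have "\<dots> \<le> R * \<delta>"
      using \<rho>_bounds[OF x] close x by (intro mult_mono) (auto simp: unif_close_def)
    finally show "\<bar>\<rho> x * w1 x - \<rho> x * w2 x\<bar> \<le> R * \<delta>" .
  qed
  then have "\<bar>integral {0..1} (\<lambda>x. \<rho> x * w1 x) - integral {0..1} (\<lambda>x. \<rho> x * w2 x)\<bar> \<le> R * \<delta>"
    by (intro abs_integral_diff_le continuous_intros \<rho>_cont c)
  moreover have "\<bar>integral {0..1} (nonlocal_term w1) - integral {0..1} (nonlocal_term w2)\<bar> \<le> 2 * b1 * C * \<delta>"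
    by (intro abs_integral_diff_le continuous_on_nonlocal_term c unif_close_nonlocal_term w1 w2 close)
  ultimately have "\<bar>balance w1 - balance w2\<bar> \<le> R * \<delta> / b0 + R * (2 * b1 * C * \<delta>) / b0\<^sup>2"
    unfolding balance_def
    using b0_pos integral_nonlocal_term_bounds(1)[OF w1] integral_nonlocal_term_bounds(1)[OF w2]
      decay_integral_bounds[OF w2]
    by (intro abs_quotient_diff_le) auto
  then show ?thesis by (simp add: algebra_simps)
qed

lemma unif_close_source:
  assumes C: "0 \<le> C"
  obtains L where "0 \<le> L"
    "\<And>w1 w2 \<delta>. w1 \<in> densities C \<Longrightarrow> w2 \<in> densities C \<Longrightarrow> unif_close \<delta> w1 w2
       \<Longrightarrow> unif_close (L * \<delta>) (source w1) (source w2)"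
proof
  define Lb where "Lb = R / b0 + R * (2 * b1 * C) / b0\<^sup>2"
  show "0 \<le> R + R / b0 * (2 * b1 * C) + Lb * (b1 * C)"
    using R_nonneg b0_pos b1_nonneg C by (simp add: Lb_def)
  fix w1 w2 \<delta> assume w1: "w1 \<in> densities C" and w2: "w2 \<in> densities C" and close: "unif_close \<delta> w1 w2"
  show "unif_close ((R + R / b0 * (2 * b1 * C) + Lb * (b1 * C)) * \<delta>) (source w1) (source w2)"
    unfolding unif_close_def
  proof
    fix x :: real assume x: "x \<in> {0..1}"
    have "\<bar>w1 x - w2 x\<bar> \<le> \<delta>" using close x by (simp add: unif_close_def)
    then have t1: "\<bar>\<rho> x * (w1 x - w2 x)\<bar> \<le> R * \<delta>"
      using \<rho>_bounds[OF x] by (simp add: abs_mult mult_mono)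
    have "\<bar>nonlocal_term w1 x - nonlocal_term w2 x\<bar> \<le> 2 * b1 * C * \<delta>"
      using unif_close_nonlocal_term[OF w1 w2 close] x by (simp add: unif_close_def)
    then have t2: "\<bar>balance w1 * (nonlocal_term w1 x - nonlocal_term w2 x)\<bar> \<le> R / b0 * (2 * b1 * C * \<delta>)"
      using balance_bounds[OF w1] unfolding abs_mult by (intro mult_mono) auto
    have t3: "\<bar>(balance w1 - balance w2) * nonlocal_term w2 x\<bar> \<le> Lb * \<delta> * (b1 * C)"
      using balance_lipschitz[OF w1 w2 close] nonlocal_term_bounds[OF w2 x] b0_pos
        unif_close_nonneg[OF close] R_nonneg b1_nonneg C
      unfolding abs_mult Lb_def by (intro mult_mono) auto
    have "source w1 x - source w2 x = \<rho> x * (w1 x - w2 x)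
        - balance w1 * (nonlocal_term w1 x - nonlocal_term w2 x) - (balance w1 - balance w2) * nonlocal_term w2 x"
      by (simp add: source_def algebra_simps)
    then have "\<bar>source w1 x - source w2 x\<bar> \<le> R * \<delta> + R / b0 * (2 * b1 * C * \<delta>) + Lb * \<delta> * (b1 * C)"
      using t1 t2 t3 by (smt (verit, best) abs_triangle_ineq4 abs_triangle_ineq)
    then show "\<bar>source w1 x - source w2 x\<bar> \<le> (R + R / b0 * (2 * b1 * C) + Lb * (b1 * C)) * \<delta>"
      by (simp add: algebra_simps)
  qed
qed

lemma continuous_on_flux: "w \<in> densities C \<Longrightarrow> continuous_on {0..1} (flux w)"
  unfolding flux_def[abs_def] using d_nonzero
  by (intro continuous_intros continuous_on_primitive continuous_on_source d_cont) auto

lemma abs_flux_le: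
  assumes "w \<in> densities C" "x \<in> {0..1}"
  shows "\<bar>flux w x\<bar> \<le> R / d0"
  using abs_primitive_source_le[OF assms] d_lower[OF assms(2)] d_pos[OF assms(2)] d0_pos R_nonneg
  by (simp add: flux_def abs_divide frac_le)

lemma unif_close_flux:
  assumes C: "0 \<le> C"
  obtains L where "0 \<le> L"
    "\<And>w1 w2 \<delta>. w1 \<in> densities C \<Longrightarrow> w2 \<in> densities C \<Longrightarrow> unif_close \<delta> w1 w2
       \<Longrightarrow> unif_close (L * \<delta>) (flux w1) (flux w2)"
proof -
  obtain L where L: "0 \<le> L"
    and source: "\<And>w1 w2 \<delta>. w1 \<in> densities C \<Longrightarrow> w2 \<in> densities C \<Longrightarrow> unif_close \<delta> w1 w2
       \<Longrightarrow> unif_close (L * \<delta>) (source w1) (source w2)"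
    using unif_close_source[OF C] by blast
  show thesis
  proof (rule that[of "L / d0"])
    show "0 \<le> L / d0" using L d0_pos by simp
    fix w1 w2 \<delta> assume w1: "w1 \<in> densities C" and w2: "w2 \<in> densities C" and close: "unif_close \<delta> w1 w2"
    have F: "unif_close (L * \<delta>) (primitive (source w1)) (primitive (source w2))"
      by (intro unif_close_primitive continuous_on_source[OF w1] continuous_on_source[OF w2] source w1 w2 close)
    show "unif_close (L / d0 * \<delta>) (flux w1) (flux w2)"
      unfolding unif_close_def
    proof
      fix x :: real assume x: "x \<in> {0..1}"
      have "\<bar>primitive (source w1) x - primitive (source w2) x\<bar> \<le> L * \<delta>"
        using F x by (simp add: unif_close_def)
      then have "\<bar>primitive (source w1) x - primitive (source w2) x\<bar> / d x \<le> L * \<delta> / d0"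
        using d_lower[OF x] d0_pos by (intro frac_le) auto
      then show "\<bar>flux w1 x - flux w2 x\<bar> \<le> L / d0 * \<delta>"
        using d_pos[OF x] by (simp add: flux_def abs_divide diff_divide_distrib[symmetric])
    qed
  qed
qed

lemma \<Phi>_unit_mass:
  assumes "v \<in> unit_mass C"
  shows "\<Phi> v \<in> unit_mass (2 * (R / d0) + 1)"
  unfolding \<Phi>_def
  using normalize_pos_densities[OF assms] abs_flux_le
  by (intro normalize_mass_in_unit_mass continuous_on_primitive abs_primitive_le continuous_on_flux) auto

lemma lipschitz_on_\<Phi>:
  assumes "v \<in> unit_mass C"
  shows "(R / d0)-lipschitz_on {0..1} (\<Phi> v)"
  unfolding \<Phi>_def
  using normalize_pos_densities[OF assms] abs_flux_le
  by (intro lipschitz_on_normalize_mass lipschitz_on_primitive continuous_on_flux) auto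

lemma unif_close_\<Phi>:
  assumes C: "0 \<le> C"
  obtains L where "0 \<le> L"
    "\<And>u v \<delta>. u \<in> unit_mass C \<Longrightarrow> v \<in> unit_mass C \<Longrightarrow> unif_close \<delta> u v
       \<Longrightarrow> unif_close (L * \<delta>) (\<Phi> u) (\<Phi> v)"
proof -
  obtain L where L: "0 \<le> L"
    and flux: "\<And>w1 w2 \<delta>. w1 \<in> densities C \<Longrightarrow> w2 \<in> densities C \<Longrightarrow> unif_close \<delta> w1 w2
       \<Longrightarrow> unif_close (L * \<delta>) (flux w1) (flux w2)"
    using unif_close_flux[OF C] by blast
  show thesis
  proof (rule that[of "2 * (L * (1 + C))"])
    show "0 \<le> 2 * (L * (1 + C))" using L C by simp
    fix u v \<delta> assume u: "u \<in> unit_mass C" and v: "v \<in> unit_mass C" and close: "unif_close \<delta> u v"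
    note pos = normalize_pos_densities[OF u] normalize_pos_densities[OF v]
    have "unif_close (L * ((1 + C) * \<delta>)) (flux (normalize_pos u)) (flux (normalize_pos v))"
      by (intro flux pos unif_close_normalize_pos u v close)
    then have "unif_close (2 * (L * ((1 + C) * \<delta>))) (\<Phi> u) (\<Phi> v)"
      unfolding \<Phi>_def
      by (intro unif_close_normalize_mass continuous_on_primitive unif_close_primitive
          continuous_on_flux[OF pos(1)] continuous_on_flux[OF pos(2)])
    then show "unif_close (2 * (L * (1 + C)) * \<delta>) (\<Phi> u) (\<Phi> v)" by (simp add: algebra_simps)
  qed
qed

lemma \<Phi>_fixed_point: "\<exists>C. \<exists>u \<in> unit_mass C. \<forall>x\<in>{0..1}. \<Phi> u x = u x"
proof -
  define M where "M = 2 * (R / d0) + 1"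
  have "0 \<le> R / d0" using R_nonneg d0_pos by simp
  then have M: "0 < M" by (simp add: M_def)
  then obtain L where "0 \<le> L"
    and "\<And>u v \<delta>. u \<in> unit_mass (2 * M + 1) \<Longrightarrow> v \<in> unit_mass (2 * M + 1)
       \<Longrightarrow> unif_close \<delta> u v \<Longrightarrow> unif_close (L * \<delta>) (\<Phi> u) (\<Phi> v)"
    using unif_close_\<Phi>[of "2 * M + 1"] by auto
  then interpret unit_mass_map \<Phi> M "R / d0" L
    using M \<Phi>_unit_mass lipschitz_on_\<Phi> unfolding M_def by unfold_locales blast+
  show ?thesis using fixed_point by blast
qed

section \<open>Fixed points are steady states\<close>

context
  fixes u :: "real \<Rightarrow> real" and C :: real
  assumes u: "u \<in> unit_mass C" and u_fixed: "\<And>x. x \<in> {0..1} \<Longrightarrow> \<Phi> u x = u x"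
begin

lemma fixed_point_eq:
  "x \<in> {0..1} \<Longrightarrow> u x = primitive (flux (normalize_pos u)) x + (1 - integral {0..1} (primitive (flux (normalize_pos u))))"
  using u_fixed[of x] by (simp add: \<Phi>_def normalize_mass_def)

lemma fixed_point_balance_pos: "0 < balance (normalize_pos u)"
proof (rule ccontr)
  let ?w = "normalize_pos u"
  have w: "?w \<in> densities C" by (rule normalize_pos_densities[OF u])
  assume "\<not> 0 < balance ?w"
  then have balance: "balance ?w = 0" using balance_bounds(1)[OF w] by simp
  have cont: "continuous_on {0..1} (\<lambda>x. \<rho> x * ?w x)"
    using w by (intro continuous_intros \<rho>_cont) (simp add: densities_def unit_mass_def)
  have "integral {0..1} (\<lambda>x. \<rho> x * ?w x) = 0" using decay_integral_eq_balance[OF w] balance by simp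
  then have \<rho>w: "\<rho> x * ?w x = 0" if "x \<in> {0..1}" for x
    using integral_eq_0_iff[OF cont] \<rho>_bounds w that by (force simp: densities_def)
  then have "source ?w x = 0" if "x \<in> {0..1}" for x
    using that balance by (simp add: source_def)
  then have "flux ?w x = 0" if "x \<in> {0..1}" for x
    using primitive_eq_0[OF _ that] by (simp add: flux_def)
  then have "primitive (flux ?w) x = 0" if "x \<in> {0..1}" for x
    using that by (rule primitive_eq_0)
  then have u1: "u x = 1" if "x \<in> {0..1}" for x
    using fixed_point_eq[OF that] that primitive_eq_0[of "primitive (flux ?w)" 1]
    by (simp add: primitive_def)
  then have "?w x = 1" if "x \<in> {0..1}" for x
    using normalize_pos_eq[OF u _ that] u1 that by simp
  then show False using \<rho>w \<rho>_nonzero by force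
qed

lemma fixed_point_pos: "x \<in> {0..1} \<Longrightarrow> 0 < u x"
proof -
  let ?w = "normalize_pos u"
  have w: "?w \<in> densities C" by (rule normalize_pos_densities[OF u])
  obtain x0 where x0: "x0 \<in> {0..1}" and min: "\<And>y. y \<in> {0..1} \<Longrightarrow> u x0 \<le> u y"
    using continuous_attains_inf[of "{0..1}" u] u by (auto simp: unit_mass_def)
  have "0 < u x0"
  proof (rule ccontr)
    assume "\<not> 0 < u x0"
    then have "source ?w x0 < 0"
      using fixed_point_balance_pos nonlocal_term_bounds(1)[OF w x0] b0_pos
      by (simp add: source_def normalize_pos_def mult_pos_pos)
    moreover have "0 \<le> source ?w x0"
    proof (rule neumann_minimum_principle[OF continuous_on_source[OF w] integral_source[OF w] d_cont d_pos x0])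
      fix y :: real assume "y \<in> {0..1}"
      then show "primitive (\<lambda>t. primitive (source ?w) t / d t) x0 \<le> primitive (\<lambda>t. primitive (source ?w) t / d t) y"
        using min fixed_point_eq x0 by (fastforce simp: flux_def[abs_def])
    qed
    ultimately show False by simp
  qed
  then show "x \<in> {0..1} \<Longrightarrow> 0 < u x" using min by (meson less_le_trans)
qed

lemma fixed_point_density: "x \<in> {0..1} \<Longrightarrow> normalize_pos u x = u x"
  using normalize_pos_eq[OF u] fixed_point_pos by (simp add: less_imp_le)

lemma fixed_point_steady_state:
  "steady_state \<beta> d \<rho> (balance (normalize_pos u)) u (flux (normalize_pos u))"
proof -
  let ?w = "normalize_pos u" and ?\<sigma> = "balance (normalize_pos u)"
  have w: "?w \<in> densities C" by (rule normalize_pos_densities[OF u])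
  have K: "nonlocal_term ?w = (\<lambda>x. integral {0..1} (\<lambda>y. \<beta> x y * (u y)\<^sup>2))"
    unfolding nonlocal_term_def[abs_def] using fixed_point_density by (intro ext integral_cong) auto
  have deriv: "(u has_real_derivative flux ?w x) (at x within {0..1})" if x: "x \<in> {0..1}" for x
  proof -
    have "((\<lambda>y. primitive (flux ?w) y + (1 - integral {0..1} (primitive (flux ?w))))
        has_real_derivative flux ?w x + 0) (at x within {0..1})"
      by (rule DERIV_add[OF primitive_has_real_derivative[OF continuous_on_flux[OF w] x] DERIV_const])
    then show ?thesis
      unfolding add_0_right by (rule has_field_derivative_transform_within[OF _ zero_less_one x])
        (simp add: fixed_point_eq)
  qed
  have flux_ode: "((\<lambda>t. d t * flux ?w t) has_real_derivative
      \<rho> x * u x - ?\<sigma> * integral {0..1} (\<lambda>y. \<beta> x y * (u y)\<^sup>2)) (at x)" if x: "x \<in> {0<..<1}" for x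
  proof -
    have "(primitive (source ?w) has_real_derivative source ?w x) (at x)"
      using primitive_has_real_derivative[OF continuous_on_source[OF w], of x] x by (simp add: at_within_Icc_at)
    then have "((\<lambda>t. d t * flux ?w t) has_real_derivative source ?w x) (at x)"
      by (rule has_field_derivative_transform_within_open[of _ _ _ "{0<..<1}"])
        (use x d_nonzero in \<open>auto simp: flux_def\<close>)
    then show ?thesis using x fixed_point_density[of x] by (simp add: source_def K)
  qed
  have "integral {0..1} (\<lambda>x. \<rho> x * u x) = integral {0..1} (\<lambda>x. \<rho> x * ?w x)"
    using fixed_point_density by (intro integral_cong) auto
  then have "integral {0..1} (\<lambda>x. \<rho> x * u x) = ?\<sigma> * integral {0..1} (\<lambda>x. integral {0..1} (\<lambda>y. \<beta> x y * (u y)\<^sup>2))"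
    using decay_integral_eq_balance[OF w] by (simp add: K)
  moreover have "flux ?w 0 = 0" "flux ?w 1 = 0"
    using integral_source[OF w] by (simp_all add: flux_def primitive_def)
  ultimately show ?thesis
    unfolding steady_state_def using fixed_point_pos deriv continuous_on_flux[OF w] flux_ode by auto
qed

end

lemma steady_state_exists: "\<exists>\<sigma>>0. \<exists>v v'. steady_state \<beta> d \<rho> \<sigma> v v'"
proof -
  obtain C u where "u \<in> unit_mass C" "\<And>x. x \<in> {0..1} \<Longrightarrow> \<Phi> u x = u x"
    using \<Phi>_fixed_point by blast
  then show ?thesis using fixed_point_steady_state fixed_point_balance_pos by blast
qed

end

lemma steady_state_rescale:
  assumes v: "steady_state \<beta> d \<rho> \<sigma> v v'" and \<sigma>: "0 < \<sigma>" and S: "0 < S"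
  shows "steady_state \<beta> d \<rho> S (\<lambda>x. \<sigma> / S * v x) (\<lambda>x. \<sigma> / S * v' x)"
proof -
  define \<kappa> where "\<kappa> = \<sigma> / S"
  have \<kappa>: "0 < \<kappa>" using \<sigma> S by (simp add: \<kappa>_def)
  define I where "I x = integral {0..1} (\<lambda>y. \<beta> x y * (v y)\<^sup>2)" for x
  have I: "integral {0..1} (\<lambda>y. \<beta> x y * (\<kappa> * v y)\<^sup>2) = \<kappa>\<^sup>2 * I x" for x
  proof -
    have "(\<lambda>y. \<beta> x y * (\<kappa> * v y)\<^sup>2) = (\<lambda>y. \<kappa>\<^sup>2 * (\<beta> x y * (v y)\<^sup>2))"
      by (simp add: fun_eq_iff power_mult_distrib mult_ac)
    then show ?thesis by (simp add: I_def)
  qed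
  have S\<kappa>: "S * (\<kappa>\<^sup>2 * c) = \<kappa> * (\<sigma> * c)" for c
    using S by (simp add: \<kappa>_def power2_eq_square)
  note v = v[unfolded steady_state_def, folded I_def]
  show ?thesis
    unfolding steady_state_def \<kappa>_def[symmetric] I
  proof (intro conjI ballI)
    show "0 < \<kappa> * v x" if "x \<in> {0..1}" for x using v \<kappa> that by simp
    show "((\<lambda>x. \<kappa> * v x) has_real_derivative \<kappa> * v' x) (at x within {0..1})" if "x \<in> {0..1}" for x
      using v that by (intro DERIV_cmult) simp
    show "continuous_on {0..1} (\<lambda>x. \<kappa> * v' x)" using v by (intro continuous_intros) simp
    show "\<kappa> * v' 0 = 0" "\<kappa> * v' 1 = 0" using v by simp_all
    show "((\<lambda>t. d t * (\<kappa> * v' t)) has_real_derivative \<rho> x * (\<kappa> * v x) - S * (\<kappa>\<^sup>2 * I x)) (at x)"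
      if "x \<in> {0<..<1}" for x
    proof -
      have "((\<lambda>t. \<kappa> * (d t * v' t)) has_real_derivative \<kappa> * (\<rho> x * v x - \<sigma> * I x)) (at x)"
        using v that by (intro DERIV_cmult) simp
      then show ?thesis by (simp add: S\<kappa> right_diff_distrib mult.left_commute)
    qed
    have "integral {0..1} (\<lambda>x. \<rho> x * v x) - \<sigma> * integral {0..1} I = 0" using v by simp
    then show "integral {0..1} (\<lambda>x. \<rho> x * (\<kappa> * v x)) - S * integral {0..1} (\<lambda>x. \<kappa>\<^sup>2 * I x) = 0"
      by (simp add: S\<kappa> mult.left_commute flip: right_diff_distrib)
  qed
qed

lemma steady_state_cong:
  assumes v: "steady_state \<beta> d \<rho> S v v'"
    and eq: "\<And>x. x \<in> {0<..<1} \<Longrightarrow> d' x = d x" "\<And>x. x \<in> {0<..<1} \<Longrightarrow> \<rho>' x = \<rho> x"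
  shows "steady_state \<beta> d' \<rho>' S v v'"
proof -
  have "((\<lambda>t. d' t * v' t) has_real_derivative
      \<rho>' x * v x - S * integral {0..1} (\<lambda>y. \<beta> x y * (v y)\<^sup>2)) (at x)" if x: "x \<in> {0<..<1}" for x
  proof -
    have "((\<lambda>t. d t * v' t) has_real_derivative
        \<rho> x * v x - S * integral {0..1} (\<lambda>y. \<beta> x y * (v y)\<^sup>2)) (at x)"
      using v x by (simp add: steady_state_def)
    then show ?thesis
      unfolding eq(2)[OF x]
      by (rule has_field_derivative_transform_within_open[of _ _ _ "{0<..<1}"]) (use x eq(1) in auto)
  qed
  moreover have "integral {0..1} (\<lambda>x. \<rho>' x * v x) = integral {0..1} (\<lambda>x. \<rho> x * v x)"
    using eq(2) by (intro integral_spike[of "{0, 1}"]) auto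
  ultimately show ?thesis using v by (simp add: steady_state_def)
qed

lemma compact_pos_bounds:
  fixes f :: "'a::topological_space \<Rightarrow> real"
  assumes K: "compact K" "K \<noteq> {}" and f: "continuous_on K f" "\<And>z. z \<in> K \<Longrightarrow> 0 < f z"
  obtains m M where "0 < m" "\<And>z. z \<in> K \<Longrightarrow> m \<le> f z \<and> f z \<le> M"
proof -
  obtain z0 where "z0 \<in> K" "\<And>z. z \<in> K \<Longrightarrow> f z0 \<le> f z"
    using continuous_attains_inf[OF K f(1)] by blast
  moreover obtain z1 where "\<And>z. z \<in> K \<Longrightarrow> f z \<le> f z1"
    using continuous_attains_sup[OF K f(1)] by blast
  ultimately show thesis using f(2) that[of "f z0" "f z1"] by blast
qed

lemma C1_on_square_continuous:
  assumes "C1_on_square \<beta>"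
  shows "continuous_on ({0..1} \<times> {0..1}) (\<lambda>(x, y). \<beta> x y)"
proof -
  obtain D where "\<And>z. z \<in> unit_square \<Longrightarrow>
      ((\<lambda>(x, y). \<beta> x y) has_derivative blinfun_apply (D z)) (at z within unit_square)"
    using assms unfolding C1_on_square_def by blast
  then show ?thesis
    unfolding continuous_on_eq_continuous_within unit_square_def[symmetric]
    using has_derivative_continuous by blast
qed

lemma C1_open_bounded_abs_le:
  assumes "C1_open_bounded f M" "x \<in> {0<..<1}"
  shows "\<bar>f x\<bar> \<le> M"
proof -
  obtain f' :: "real \<Rightarrow> real" where "\<forall>x\<in>{0<..<1}. \<forall>y\<in>{0<..<1}. \<bar>f x\<bar> + \<bar>f' y\<bar> \<le> M"
    using assms(1) unfolding C1_open_bounded_def by blast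
  then have "\<bar>f x\<bar> + \<bar>f' x\<bar> \<le> M" using assms(2) by blast
  then show ?thesis using abs_ge_zero[of "f' x"] by linarith
qed

lemma C1_open_bounded_extension:
  assumes "C1_open_bounded f M"
  obtains g where "continuous_on {0..1} g" "\<And>x. x \<in> {0<..<1} \<Longrightarrow> g x = f x"
proof -
  obtain f' where der: "\<And>x. x \<in> {0<..<1} \<Longrightarrow> (f has_real_derivative f' x) (at x)"
    and bound: "\<And>x y. x \<in> {0<..<1} \<Longrightarrow> y \<in> {0<..<1} \<Longrightarrow> \<bar>f x\<bar> + \<bar>f' y\<bar> \<le> M"
    using assms unfolding C1_open_bounded_def by blast
  have f': "\<bar>f' y\<bar> \<le> M" if "y \<in> {0<..<1}" for y
    using bound[OF that that] abs_ge_zero[of "f y"] by linarith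
  have "M-lipschitz_on {0<..<1} f"
  proof (rule lipschitz_onI)
    show "0 \<le> M" using f'[of "1/2"] by simp
    fix x y :: real assume "x \<in> {0<..<1}" "y \<in> {0<..<1}"
    then show "dist (f x) (f y) \<le> M * dist x y"
      using field_differentiable_bound[of "{0<..<1}" f f' M x y] der f'
      by (simp add: dist_real_def has_field_derivative_at_within)
  qed
  then obtain g where g: "M-lipschitz_on (closure {0<..<1}) g" "\<forall>x\<in>{0<..<1}. g x = f x"
    using lipschitz_extend_closure by blast
  show thesis
  proof (rule that)
    show "continuous_on {0..1} g" using lipschitz_on_continuous_on[OF g(1)] by simp
  qed (use g(2) in blast)
qed

lemma continuous_extension_in_closed:
  fixes g :: "real \<Rightarrow> real"
  assumes "continuous_on {0..1} g" "closed T" "\<And>x. x \<in> {0<..<1} \<Longrightarrow> g x \<in> T" "x \<in> {0..1}"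
  shows "g x \<in> T"
proof -
  have "g ` closure {0<..<1} \<subseteq> T"
    by (rule image_closure_subset) (use assms in auto)
  then show ?thesis using assms(4) by auto
qed

lemma nonlocal_model_extension:
  fixes \<beta> :: "real \<Rightarrow> real \<Rightarrow> real" and d \<rho> :: "real \<Rightarrow> real" and d\<^sub>0 d\<^sub>1 r :: real
  assumes beta_C1: "C1_on_square \<beta>"
    and beta_pos: "\<forall>x\<in>{0..1}. \<forall>y\<in>{0..1}. \<beta> x y > 0"
    and d_C1: "C1_open_bounded d d\<^sub>1"
    and d0_pos: "0 < d\<^sub>0"
    and d_lower: "\<forall>x\<in>{0<..<1}. d\<^sub>0 \<le> d x"
    and rho_C1: "C1_open_bounded \<rho> r"
    and rho_nonneg: "\<forall>x\<in>{0<..<1}. 0 \<le> \<rho> x"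
    and rho_nonzero: "\<exists>x\<in>{0<..<1}. \<rho> x \<noteq> 0"
  obtains \<rho>' d' b0 b1 where "nonlocal_model \<beta> \<rho>' d' b0 b1 r d\<^sub>0"
    "\<And>x. x \<in> {0<..<1} \<Longrightarrow> \<rho>' x = \<rho> x" "\<And>x. x \<in> {0<..<1} \<Longrightarrow> d' x = d x"
proof -
  have \<beta>_cont: "continuous_on ({0..1} \<times> {0..1}) (\<lambda>(x, y). \<beta> x y)"
    by (rule C1_on_square_continuous[OF beta_C1])
  obtain b0 b1 where b0: "0 < b0" and \<beta>_bounds: "\<And>x y. x \<in> {0..1} \<Longrightarrow> y \<in> {0..1} \<Longrightarrow> b0 \<le> \<beta> x y \<and> \<beta> x y \<le> b1"
  proof (rule compact_pos_bounds[OF _ _ \<beta>_cont])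
    show "compact ({0..1::real} \<times> {0..1::real})" by (simp add: compact_Times)
    show "0 < (\<lambda>(x, y). \<beta> x y) z" if "z \<in> {0..1} \<times> {0..1}" for z using beta_pos that by auto
    fix m M assume m: "0 < m"
      and bounds: "\<And>z. z \<in> {0..1} \<times> {0..1} \<Longrightarrow> m \<le> (\<lambda>(x, y). \<beta> x y) z \<and> (\<lambda>(x, y). \<beta> x y) z \<le> M"
    show thesis
    proof (rule that[OF m])
      fix x y :: real assume "x \<in> {0..1}" "y \<in> {0..1}"
      then show "m \<le> \<beta> x y \<and> \<beta> x y \<le> M" using bounds[of "(x, y)"] by simp
    qed
  qed simp
  obtain \<rho>' where \<rho>': "continuous_on {0..1} \<rho>'" "\<And>x. x \<in> {0<..<1} \<Longrightarrow> \<rho>' x = \<rho> x"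
    using C1_open_bounded_extension[OF rho_C1] by blast
  obtain d' where d': "continuous_on {0..1} d'" "\<And>x. x \<in> {0<..<1} \<Longrightarrow> d' x = d x"
    using C1_open_bounded_extension[OF d_C1] by blast
  have "nonlocal_model \<beta> \<rho>' d' b0 b1 r d\<^sub>0"
  proof
    show "0 \<le> \<rho>' x \<and> \<rho>' x \<le> r" if "x \<in> {0..1}" for x
      using continuous_extension_in_closed[OF \<rho>'(1) closed_atLeastAtMost[of 0 r] _ that]
        \<rho>'(2) rho_nonneg C1_open_bounded_abs_le[OF rho_C1] by fastforce
    show "d\<^sub>0 \<le> d' x" if "x \<in> {0..1}" for x
      using continuous_extension_in_closed[OF d'(1) closed_atLeast[of "d\<^sub>0"] _ that] d'(2) d_lower by auto
    show "\<exists>x\<in>{0..1}. 0 < \<rho>' x"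
      using rho_nonzero rho_nonneg \<rho>'(2) by (metis greaterThanLessThan_subseteq_atLeastAtMost_iff less_eq_real_def order_refl subsetD)
  qed (use \<beta>_cont b0 \<beta>_bounds \<rho>'(1) d'(1) d0_pos in auto)
  then show thesis using that \<rho>'(2) d'(2) by blast
qed

theorem theorem4p3:
  fixes \<beta> :: "real \<Rightarrow> real \<Rightarrow> real"
    and d \<rho> :: "real \<Rightarrow> real"
    and d\<^sub>0 d\<^sub>1 r S :: real
  assumes beta_C1: "C1_on_square \<beta>"
    and beta_pos: "\<forall>x\<in>{0..1}. \<forall>y\<in>{0..1}. \<beta> x y > 0"
    and d_C1: "C1_open_bounded d d\<^sub>1"
    and d0_pos: "0 < d\<^sub>0"
    and d_lower: "\<forall>x\<in>{0<..<1}. d\<^sub>0 \<le> d x"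
    and rho_C1: "C1_open_bounded \<rho> r"
    and rho_nonneg: "\<forall>x\<in>{0<..<1}. 0 \<le> \<rho> x"
    and rho_nonzero: "\<exists>x\<in>{0<..<1}. \<rho> x \<noteq> 0"
    and S_pos: "0 < S"
  shows "\<exists>v v' :: real \<Rightarrow> real.
           (\<forall>x\<in>{0..1}. 0 < v x)
         \<and> (\<forall>x\<in>{0..1}. (v has_real_derivative v' x) (at x within {0..1}))
         \<and> continuous_on {0..1} v'
         \<and> v' 0 = 0 \<and> v' 1 = 0
         \<and> (\<forall>x\<in>{0<..<1}.
              ((\<lambda>t. d t * v' t) has_real_derivative
                 (\<rho> x * v x - S * integral {0..1} (\<lambda>y. \<beta> x y * (v y)\<^sup>2))) (at x))
         \<and> integral {0..1} (\<lambda>x. \<rho> x * v x)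
             - S * integral {0..1} (\<lambda>x. integral {0..1} (\<lambda>y. \<beta> x y * (v y)\<^sup>2)) = 0"
proof -
  obtain \<rho>' d' b0 b1 where model: "nonlocal_model \<beta> \<rho>' d' b0 b1 r d\<^sub>0"
    and \<rho>': "\<And>x. x \<in> {0<..<1} \<Longrightarrow> \<rho>' x = \<rho> x" and d': "\<And>x. x \<in> {0<..<1} \<Longrightarrow> d' x = d x"
    using nonlocal_model_extension[OF beta_C1 beta_pos d_C1 d0_pos d_lower rho_C1 rho_nonneg rho_nonzero]
    by blast
  obtain \<sigma> v v' where "0 < \<sigma>" "steady_state \<beta> d' \<rho>' \<sigma> v v'"
    using nonlocal_model.steady_state_exists[OF model] by blast
  then have "steady_state \<beta> d' \<rho>' S (\<lambda>x. \<sigma> / S * v x) (\<lambda>x. \<sigma> / S * v' x)"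
    using S_pos by (intro steady_state_rescale)
  then have "steady_state \<beta> d \<rho> S (\<lambda>x. \<sigma> / S * v x) (\<lambda>x. \<sigma> / S * v' x)"
    by (rule steady_state_cong) (simp_all add: d' \<rho>')
  then have "\<exists>v v'. steady_state \<beta> d \<rho> S v v'" by blast
  then show ?thesis by (simp only: steady_state_def)
qed

end
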